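(* Let $M,N$ be integers with $N\ge0$, and let $\phi\in\mathcal{D}_N^M$ be a refinable function with $\widehat\phi(0)\ne0$. Then there exist complex numbers $h_k$, $k=0,\dots,p^{N+1}-1$, with $\phi(x)=\sum_{k=0}^{p^{N+1}-1}h_k\phi\big(\frac{x}{p}-\frac{k}{p^{N+1}}\big)$ for all $x\in\mathbb{Q}_p$, and for $m_0(\xi)=\frac1p\sum_{k=0}^{p^{N+1}-1}h_k\chi_p(k\xi)$ one has $$\widehat\phi(\xi)=\widehat\phi(0)\prod_{j=0}^{\infty}m_0\Big(\frac{\xi}{p^{N-j}}\Big)\qquad\text{for all }\xi\in\mathbb{Q}_p .$$
   Context: $p$ is a prime, $\mathbb{Q}_p$ the field of $p$-adic numbers with norm $|\cdot|_p$. The fractional part of $x=p^{\gamma}\sum_{j\ge0}x_jp^j$ ($x_j\in\{0,\dots,p-1\}$, $x_0\ne0$) is $\{x\}_p=p^{\gamma}\sum_{j=0}^{-\gamma-1}x_jp^j$, $\{0\}_p=0$; $\chi_p(x)=e^{2\pi i\{x\}_p}$; $I_p=\{a:\{a\}_p=a\}$; $B_\gamma(a)=\{x:|x-a|_p\le p^\gamma\}$. $dx$ is Haar measure with $B_0(0)$ of measure 1, and $\widehat f(\xi)=\int\chi_p(\xi x)f(x)\,dx$. A test function is a locally constant compactly supported complex function on $\mathbb{Q}_p$ (locally constant: for each $x$ there is $l\in\mathbb{Z}$ with $f(x+y)=f(x)$ for all $y\in B_l(0)$). $\mathcal{D}_N^M$ denotes the set of test functions $\phi$ that are $p^M$-periodic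 ($\phi(x+p^M)=\phi(x)$ for all $x$) and supported in $B_N(0)$; equivalently, locally constant $\phi$ with $\operatorname{supp}\phi\subset B_N(0)$ and $\operatorname{supp}\widehat\phi\subset B_M(0)$. A function $\phi\in L^2(\mathbb{Q}_p)$ is refinable if $\phi(x)=\sum_{a\in I_p}\alpha_a\phi(p^{-1}x-a)$ for some complex $\alpha_a$ (convergence in $L^2$). *)

theory Defs
  imports Complex_Main "HOL-Computational_Algebra.Primes"
begin

text \<open>An element x of Q_p is encoded by the function n \<mapsto> (x mod p^n Z_p), n an integer,
  where the class of x in Q_p / p^n Z_p = Z[1/p] / p^n Z is represented by its unique
  representative in the rational interval [0, p^n) with p-power denominator.
  In terms of the digit expansion x = sum_j x_j p^j one has (x mod p^n Z_p) = sum_{j<n} x_j p^j.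
  The carrier of all such codes is Qp p.\<close>

type_synonym padic = "int \<Rightarrow> rat"

definition ppow :: "nat \<Rightarrow> int \<Rightarrow> rat" where
  "ppow p n = (of_nat p) powi n"

definition rmod :: "nat \<Rightarrow> rat \<Rightarrow> int \<Rightarrow> rat" where
  "rmod p q n = q - ppow p n * of_int \<lfloor>q / ppow p n\<rfloor>"

definition zinvp :: "nat \<Rightarrow> rat \<Rightarrow> bool" where
  "zinvp p q \<longleftrightarrow> (\<exists>k::int. \<exists>m::nat. q = of_int k / (of_nat p) ^ m)"

definition Qp :: "nat \<Rightarrow> padic set" where
  "Qp p = {x. (\<forall>n. zinvp p (x n) \<and> 0 \<le> x n \<and> x n < ppow p n \<and> x n = rmod p (x (n + 1)) n)
              \<and> (\<exists>b. \<forall>n\<le>b. x n = 0)}"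

definition emb :: "nat \<Rightarrow> rat \<Rightarrow> padic" where
  "emb p q = (\<lambda>n. rmod p q n)"

definition pzero :: "nat \<Rightarrow> padic" where
  "pzero p = emb p 0"

definition padd :: "nat \<Rightarrow> padic \<Rightarrow> padic \<Rightarrow> padic" where
  "padd p x y = (\<lambda>n. rmod p (x n + y n) n)"

definition pneg :: "nat \<Rightarrow> padic \<Rightarrow> padic" where
  "pneg p x = (\<lambda>n. rmod p (- x n) n)"

definition psub :: "nat \<Rightarrow> padic \<Rightarrow> padic \<Rightarrow> padic" where
  "psub p x y = padd p x (pneg p y)"

definition lowb :: "padic \<Rightarrow> int" where
  "lowb x = (SOME b. \<forall>n\<le>b. x n = 0)"

text \<open>Multiplication: x*y mod p^n is determined by x mod p^m and y mod p^m for
  m \<ge> n - min(v(x), v(y)).\<close>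
definition pmul :: "nat \<Rightarrow> padic \<Rightarrow> padic \<Rightarrow> padic" where
  "pmul p x y = (\<lambda>n. let m = n - min (lowb x) (lowb y) in rmod p (x m * y m) n)"

text \<open>p-adic norm |x|_p = p^(-v(x)), where x_j = 0 for j < v(x) and x_{v(x)} \<noteq> 0.\<close>
definition pnorm :: "nat \<Rightarrow> padic \<Rightarrow> real" where
  "pnorm p x = (if (\<forall>n. x n = 0) then 0
                else real_of_rat (ppow p (- (GREATEST b. \<forall>n\<le>b. x n = 0))))"

text \<open>Fractional part {x}_p = sum_{j<0} x_j p^j, i.e. x mod Z_p.\<close>
definition pfrac :: "padic \<Rightarrow> rat" where
  "pfrac x = x 0"

definition chi :: "padic \<Rightarrow> complex" where
  "chi x = cis (2 * pi * real_of_rat (pfrac x))"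

definition Ip :: "nat \<Rightarrow> padic set" where
  "Ip p = {a \<in> Qp p. emb p (pfrac a) = a}"

definition locally_constant :: "nat \<Rightarrow> (padic \<Rightarrow> complex) \<Rightarrow> bool" where
  "locally_constant p f \<longleftrightarrow>
     (\<forall>x\<in>Qp p. \<exists>l::int. \<forall>y\<in>Qp p. pnorm p y \<le> real_of_rat (ppow p l) \<longrightarrow> f (padd p x y) = f x)"

definition supported_in_ball :: "nat \<Rightarrow> int \<Rightarrow> (padic \<Rightarrow> complex) \<Rightarrow> bool" where
  "supported_in_ball p N f \<longleftrightarrow> (\<forall>x\<in>Qp p. f x \<noteq> 0 \<longrightarrow> pnorm p x \<le> real_of_rat (ppow p N))"

text \<open>Compactly supported = support contained in some ball B_N(0) (compact subsets of Q_p are bounded).\<close>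
definition test_fun :: "nat \<Rightarrow> (padic \<Rightarrow> complex) \<Rightarrow> bool" where
  "test_fun p f \<longleftrightarrow> locally_constant p f \<and> (\<exists>N. supported_in_ball p N f)"

definition DNM :: "nat \<Rightarrow> int \<Rightarrow> int \<Rightarrow> (padic \<Rightarrow> complex) \<Rightarrow> bool" where
  "DNM p N M f \<longleftrightarrow> test_fun p f
     \<and> (\<forall>x\<in>Qp p. f (padd p x (emb p (ppow p M))) = f x)
     \<and> supported_in_ball p N f"

text \<open>Haar integral (B_0(0) of measure 1) of a test function: if f is supported in B_N(0) and
  constant on cosets of B_l(0) (l \<le> N), then the integral is p^l times the sum of f over the
  representatives k p^(-N), 0 \<le> k < p^(N-l), of B_N(0)/B_l(0). The value does not depend on the
  choice of N and l.\<close>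
definition tint :: "nat \<Rightarrow> (padic \<Rightarrow> complex) \<Rightarrow> complex" where
  "tint p f = (SOME I. \<exists>N l::int. l \<le> N \<and> supported_in_ball p N f
       \<and> (\<forall>x\<in>Qp p. \<forall>y\<in>Qp p. pnorm p y \<le> real_of_rat (ppow p l) \<longrightarrow> f (padd p x y) = f x)
       \<and> I = of_real (real_of_rat (ppow p l)) *
             (\<Sum>k<p ^ nat (N - l). f (emb p (of_nat k * ppow p (- N)))))"

definition phat :: "nat \<Rightarrow> (padic \<Rightarrow> complex) \<Rightarrow> padic \<Rightarrow> complex" where
  "phat p f \<xi> = tint p (\<lambda>x. chi (pmul p \<xi> x) * f x)"

text \<open>Refinability of a test function phi: phi(x) = sum_{a \<in> I_p} alpha_a phi(x/p - a),
  the series converging (unconditionally) in L^2. Since phi and all finite partial sums are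
  test functions, the L^2 distance is computed with the Haar integral of test functions.\<close>
definition refinable :: "nat \<Rightarrow> (padic \<Rightarrow> complex) \<Rightarrow> bool" where
  "refinable p \<phi> \<longleftrightarrow> (\<exists>\<alpha> :: padic \<Rightarrow> complex. \<forall>\<epsilon>>0. \<exists>F0. finite F0 \<and> F0 \<subseteq> Ip p \<and>
     (\<forall>F. finite F \<and> F0 \<subseteq> F \<and> F \<subseteq> Ip p \<longrightarrow>
        Re (tint p (\<lambda>x. complex_of_real ((cmod (\<phi> x -
             (\<Sum>a\<in>F. \<alpha> a * \<phi> (psub p (pmul p (emb p (1 / of_nat p)) x) a))))\<^sup>2))) < \<epsilon>))"

end

theory Submission
  imports Defs
begin

text \<open>Since \<open>\<phi>\<close> is supported in \<open>B\<^sub>N(0)\<close>, for \<open>|x|\<^sub>p \<le> p\<^sup>N\<close> the term \<open>\<phi>(x/p - a)\<close> of the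
  refinement series vanishes unless \<open>a \<in> I\<^sub>p \<inter> B\<^bsub>N+1\<^esub>(0)\<close>, i.e. \<open>a = k/p\<^bsup>N+1\<^esup>\<close> with
  \<open>0 \<le> k < p\<^bsup>N+1\<^esup>\<close>. As \<open>\<phi>\<close> and all partial sums are constant on cosets of \<open>B\<^bsub>-M-1\<^esub>(0)\<close>,
  \<open>L\<^sup>2\<close>-convergence forces this finite refinement equation to hold pointwise.
  Writing \<open>\<Phi>\<close> for the Fourier transform of \<open>\<phi>\<close> and evaluating both sides as finite Haar sums
  gives \<open>\<Phi>(\<xi>) = m\<^sub>0(\<xi>/p\<^sup>N) \<Phi>(p\<xi>)\<close>. Iterating, \<open>\<Phi>(\<xi>) = \<Phi>(p\<^sup>n\<xi>) \<Prod>\<^sub>j\<^sub><\<^sub>n m\<^sub>0(\<xi>/p\<^bsup>N-j\<^esup>)\<close>,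
  and \<open>\<Phi>(p\<^sup>n\<xi>) = \<Phi>(0)\<close> once \<open>p\<^sup>n\<xi> \<in> B\<^bsub>-N\<^esub>(0)\<close>, so the partial products are eventually
  equal to \<open>\<Phi>(\<xi>)\<close>.\<close>

definition pdvd :: "nat \<Rightarrow> int \<Rightarrow> rat \<Rightarrow> bool" where
  "pdvd p n q \<longleftrightarrow> (\<exists>i::int. q = ppow p n * of_int i)"

definition pscale :: "nat \<Rightarrow> int \<Rightarrow> padic \<Rightarrow> padic" where
  "pscale p a x = (\<lambda>n. ppow p a * x (n - a))"

definition haar_sum :: "nat \<Rightarrow> (padic \<Rightarrow> complex) \<Rightarrow> int \<Rightarrow> int \<Rightarrow> complex" where
  "haar_sum p f N l = of_real (real_of_rat (ppow p l)) *
             (\<Sum>k<p ^ nat (N - l). f (emb p (of_nat k * ppow p (- N))))"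

definition const_mod_ball :: "nat \<Rightarrow> (padic \<Rightarrow> complex) \<Rightarrow> int \<Rightarrow> bool" where
  "const_mod_ball p f l \<longleftrightarrow> (\<forall>x\<in>Qp p. \<forall>y\<in>Qp p. pnorm p y \<le> real_of_rat (ppow p l) \<longrightarrow> f (padd p x y) = f x)"

definition e2pi :: "rat \<Rightarrow> complex" where "e2pi t = cis (2 * pi * real_of_rat t)"

lemma chi_eq_e2pi: "chi z = e2pi (z 0)" unfolding chi_def e2pi_def pfrac_def ..

lemma e2pi_add: "e2pi (s + t) = e2pi s * e2pi t"
  unfolding e2pi_def by (simp add: of_rat_add distrib_left cis_mult)

lemma sum_lessThan_mult:
  fixes P Q :: nat
  shows "(\<Sum>k<P * Q. g k) = (\<Sum>b<Q. \<Sum>a<P. g (a + P * b))"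
proof (induction Q)
  case 0 then show ?case by simp
next
  case (Suc Q)
  have "(\<Sum>k<P * Suc Q. g k) = (\<Sum>k\<in>{0..<P * Q}. g k) + (\<Sum>k\<in>{P * Q..<P * Q + P}. g k)"
    by (simp add: lessThan_atLeast0 sum.atLeastLessThan_concat add.commute)
  also have "(\<Sum>k\<in>{P * Q..<P * Q + P}. g k) = (\<Sum>a\<in>{0..<P}. g (a + P * Q))"
    using sum.shift_bounds_nat_ivl[of g 0 "P * Q" P] by (simp add: add.commute)
  finally show ?case using Suc by (simp add: lessThan_atLeast0)
qed

lemma sum_mod_shift:
  fixes P j :: nat and G :: "nat \<Rightarrow> 'a::comm_monoid_add"
  assumes P: "0 < P"
  shows "(\<Sum>k<P. G (nat ((int k - int j) mod int P))) = (\<Sum>m<P. G m)"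
proof (rule sum.reindex_bij_witness[where i="\<lambda>m. nat ((int m + int j) mod int P)" and j="\<lambda>k. nat ((int k - int j) mod int P)"])
  fix a assume a: "a \<in> {..<P}"
  have "(((int a - int j) mod int P) + int j) mod int P = (int a - int j + int j) mod int P"
    by (simp add: mod_add_left_eq)
  also have "\<dots> = int a" using a by simp
  finally show "nat ((int (nat ((int a - int j) mod int P)) + int j) mod int P) = a"
    using P by simp
  show "nat ((int a - int j) mod int P) \<in> {..<P}" using P by (simp add: nat_less_iff)
next
  fix b assume b: "b \<in> {..<P}"
  have "(((int b + int j) mod int P) - int j) mod int P = (int b + int j - int j) mod int P"
    by (simp add: mod_diff_left_eq)
  also have "\<dots> = int b" using b by simp
  finally show "nat ((int (nat ((int b + int j) mod int P)) - int j) mod int P) = b"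
    using P by simp
  show "nat ((int b + int j) mod int P) \<in> {..<P}" using P by (simp add: nat_less_iff)
qed simp

section \<open>Arithmetic on codes of p-adic numbers\<close>

locale padic_base =
  fixes p :: nat
  assumes p1: "1 < p"
begin

lemma ppow_pos: "0 < ppow p n"
  using p1 by (simp add: ppow_def)

lemma ppow_nonzero: "ppow p n \<noteq> 0"
  using ppow_pos[of n] by simp

lemma ppow_add: "ppow p (a + b) = ppow p a * ppow p b"
  using p1 by (simp add: ppow_def power_int_add)

lemma ppow_nat: "0 \<le> n \<Longrightarrow> ppow p n = of_nat (p ^ nat n)"
  by (simp add: ppow_def power_int_def)

lemma ppow_diff: "a \<le> b \<Longrightarrow> ppow p b = ppow p a * of_nat (p ^ nat (b - a))"
  using ppow_add[of a "b - a"] ppow_nat[of "b - a"] by simp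

lemma ppow_mono: "a \<le> b \<Longrightarrow> ppow p a \<le> ppow p b"
  using p1 by (simp add: ppow_def power_int_increasing)

lemma ppow_strict_mono: "a < b \<Longrightarrow> ppow p a < ppow p b"
  using p1 by (simp add: ppow_def power_int_strict_increasing)

lemma ppow_le_iff: "ppow p a \<le> ppow p b \<longleftrightarrow> a \<le> b"
  using ppow_mono ppow_strict_mono by (meson linorder_not_le)

lemma ppow_0[simp]: "ppow p 0 = 1" by (simp add: ppow_def)
lemma ppow_1: "ppow p 1 = of_nat p" by (simp add: ppow_def)
lemma ppow_minus_1: "ppow p (-1) = 1 / of_nat p" by (simp add: ppow_def power_int_minus divide_inverse)

lemma pdvd_0[simp]: "pdvd p n 0" unfolding pdvd_def by (rule exI[of _ 0]) simp

lemma pdvd_add: "pdvd p n q \<Longrightarrow> pdvd p n r \<Longrightarrow> pdvd p n (q + r)"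
  unfolding pdvd_def by (metis distrib_left of_int_add)

lemma pdvd_uminus: "pdvd p n q \<Longrightarrow> pdvd p n (- q)"
  unfolding pdvd_def by (metis mult_minus_right of_int_minus)

lemma pdvd_uminus_iff: "pdvd p n (- q) \<longleftrightarrow> pdvd p n q"
  using pdvd_uminus[of n q] pdvd_uminus[of n "-q"] by auto

lemma pdvd_diff: "pdvd p n q \<Longrightarrow> pdvd p n r \<Longrightarrow> pdvd p n (q - r)"
  using pdvd_add[of n q "-r"] pdvd_uminus[of n r] by simp

lemma pdvd_diff_commute: "pdvd p n (q - r) \<longleftrightarrow> pdvd p n (r - q)"
  using pdvd_uminus_iff[of n "q - r"] by simp

lemma pdvd_cong: "pdvd p n (q - r) \<Longrightarrow> pdvd p n q \<longleftrightarrow> pdvd p n r"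
  using pdvd_add[of n "q - r" r] pdvd_diff[of n q "q - r"] by auto

lemma pdvd_mono: "m \<le> n \<Longrightarrow> pdvd p n q \<Longrightarrow> pdvd p m q"
  unfolding pdvd_def
proof -
  assume "m \<le> n" "\<exists>i. q = ppow p n * of_int i"
  then obtain i where i: "q = ppow p n * of_int i" by blast
  have "ppow p n = ppow p m * of_nat (p ^ nat (n - m))" using ppow_diff[OF \<open>m \<le> n\<close>] .
  then have "q = ppow p m * of_int (int (p ^ nat (n - m)) * i)" using i by simp
  then show "\<exists>i. q = ppow p m * of_int i" by blast
qed

lemma pdvd_mult: "pdvd p a q \<Longrightarrow> pdvd p b r \<Longrightarrow> pdvd p (a + b) (q * r)"
  unfolding pdvd_def
proof -
  assume "\<exists>i. q = ppow p a * of_int i" "\<exists>i. r = ppow p b * of_int i"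
  then obtain i j where "q = ppow p a * of_int i" "r = ppow p b * of_int j" by blast
  then have "q * r = ppow p (a + b) * of_int (i * j)" by (simp add: ppow_add)
  then show "\<exists>i. q * r = ppow p (a + b) * of_int i" by blast
qed

lemma pdvd_ppow_mult: "pdvd p n q \<Longrightarrow> pdvd p (n + a) (ppow p a * q)"
  using pdvd_mult[of a "ppow p a" n q] unfolding pdvd_def
  by (metis add.commute mult.right_neutral of_int_1)

lemma pdvd_ppow_mult_iff: "pdvd p (n + a) (ppow p a * q) \<longleftrightarrow> pdvd p n q"
proof
  assume "pdvd p (n + a) (ppow p a * q)"
  from pdvd_ppow_mult[OF this, of "-a"] have "pdvd p n (ppow p (-a) * (ppow p a * q))" by simp
  moreover have "ppow p (-a) * ppow p a = 1" using ppow_add[of "-a" a, symmetric] by simp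
  then have "ppow p (-a) * (ppow p a * q) = q" by (simp add: mult.assoc[symmetric])
  ultimately show "pdvd p n q" by simp
qed (rule pdvd_ppow_mult)

lemma pdvd_of_int: "pdvd p 0 (of_int i)" unfolding pdvd_def by auto

lemma pdvd_of_nat: "pdvd p 0 (of_nat i)" using pdvd_of_int[of "int i"] by simp

lemma rmod_pdvd: "pdvd p n (rmod p q n - q)"
  unfolding rmod_def pdvd_def by (rule exI[of _ "- \<lfloor>q / ppow p n\<rfloor>"]) simp

lemma rmod_eq_iff: "rmod p q n = rmod p r n \<longleftrightarrow> pdvd p n (q - r)"
proof
  assume eq: "rmod p q n = rmod p r n"
  have "q - r = (rmod p r n - r) - (rmod p q n - q)" using eq by simp
  then show "pdvd p n (q - r)" using pdvd_diff[OF rmod_pdvd[of n r] rmod_pdvd[of n q]] by simp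
next
  assume "pdvd p n (q - r)"
  then obtain i where i: "q - r = ppow p n * of_int i" unfolding pdvd_def by blast
  then have qi: "q = r + ppow p n * of_int i" by simp
  have "q / ppow p n = r / ppow p n + of_int i" unfolding qi using ppow_nonzero[of n]
    by (simp add: add_divide_distrib)
  then have fl: "\<lfloor>q / ppow p n\<rfloor> = \<lfloor>r / ppow p n\<rfloor> + i" by simp
  have "rmod p q n = q - ppow p n * of_int (\<lfloor>r / ppow p n\<rfloor> + i)" unfolding rmod_def fl ..
  also have "\<dots> = r - ppow p n * of_int \<lfloor>r / ppow p n\<rfloor>" unfolding qi
    by (simp add: distrib_left)
  finally show "rmod p q n = rmod p r n" unfolding rmod_def .
qed

lemma rmod_bounds: "0 \<le> rmod p q n" "rmod p q n < ppow p n"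
proof -
  have pos: "0 < ppow p n" by (rule ppow_pos)
  have "of_int \<lfloor>q / ppow p n\<rfloor> \<le> q / ppow p n" by (rule of_int_floor_le)
  then have "ppow p n * of_int \<lfloor>q / ppow p n\<rfloor> \<le> ppow p n * (q / ppow p n)" using pos
    by (intro mult_left_mono) (use pos in auto)
  then have "ppow p n * of_int \<lfloor>q / ppow p n\<rfloor> \<le> q" using pos by simp
  then show "0 \<le> rmod p q n" unfolding rmod_def by simp
  have "q / ppow p n < of_int \<lfloor>q / ppow p n\<rfloor> + 1" by (rule floor_correct[THEN conjunct2, simplified])
  then have "q < ppow p n * (of_int \<lfloor>q / ppow p n\<rfloor> + 1)" using pos
    by (simp add: field_simps)
  then show "rmod p q n < ppow p n" unfolding rmod_def by (simp add: algebra_simps)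
qed

lemma rmod_eq_self: "0 \<le> q \<Longrightarrow> q < ppow p n \<Longrightarrow> rmod p q n = q"
proof -
  assume "0 \<le> q" "q < ppow p n"
  then have "\<lfloor>q / ppow p n\<rfloor> = 0" using ppow_pos[of n] by (simp add: floor_eq_iff)
  then show ?thesis unfolding rmod_def by simp
qed

lemma rmod_eq_0_iff: "rmod p q n = 0 \<longleftrightarrow> pdvd p n q"
  using rmod_eq_iff[of q n 0] rmod_eq_self[of 0 n] ppow_pos[of n] by simp

lemma rmod_rmod: "n \<le> m \<Longrightarrow> rmod p (rmod p q m) n = rmod p q n"
  using rmod_eq_iff pdvd_mono rmod_pdvd by blast

lemma rmod_ppow_mult: "rmod p (ppow p a * q) n = ppow p a * rmod p q (n - a)"
proof -
  have e: "ppow p n = ppow p a * ppow p (n - a)" using ppow_add[of a "n - a"] by simp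
  have h: "ppow p a * q / ppow p n = q / ppow p (n - a)" unfolding e using ppow_nonzero[of a] by simp
  have "rmod p (ppow p a * q) n = ppow p a * q - ppow p n * of_int \<lfloor>q / ppow p (n - a)\<rfloor>"
    unfolding rmod_def h by simp
  also have "\<dots> = ppow p a * (q - ppow p (n - a) * of_int \<lfloor>q / ppow p (n - a)\<rfloor>)"
    unfolding e by (simp add: right_diff_distrib mult.assoc)
  finally show ?thesis unfolding rmod_def .
qed

lemma zinvp_int: "zinvp p (of_int k)"
  unfolding zinvp_def by (rule exI[of _ k], rule exI[of _ 0]) simp

lemma zinvp_add: "zinvp p q \<Longrightarrow> zinvp p r \<Longrightarrow> zinvp p (q + r)"
proof -
  assume "zinvp p q" "zinvp p r"
  then obtain k m k' m' where q: "q = of_int k / of_nat p ^ m" and r: "r = of_int k' / of_nat p ^ m'"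
    unfolding zinvp_def by blast
  have pz: "(of_nat p :: rat) ^ m \<noteq> 0" "(of_nat p :: rat) ^ m' \<noteq> 0" using p1 by auto
  have "q + r = of_int (k * int p ^ m' + k' * int p ^ m) / of_nat p ^ (m + m')"
    unfolding q r using pz by (simp add: field_simps power_add)
  then show ?thesis unfolding zinvp_def by blast
qed

lemma zinvp_mult: "zinvp p q \<Longrightarrow> zinvp p r \<Longrightarrow> zinvp p (q * r)"
proof -
  assume "zinvp p q" "zinvp p r"
  then obtain k m k' m' where q: "q = of_int k / of_nat p ^ m" and r: "r = of_int k' / of_nat p ^ m'"
    unfolding zinvp_def by blast
  have "q * r = of_int (k * k') / of_nat p ^ (m + m')"
    unfolding q r by (simp add: power_add)
  then show ?thesis unfolding zinvp_def by blast
qed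

lemma zinvp_uminus: "zinvp p q \<Longrightarrow> zinvp p (- q)"
  using zinvp_mult[OF zinvp_int[of "-1"]] by simp

lemma zinvp_diff: "zinvp p q \<Longrightarrow> zinvp p r \<Longrightarrow> zinvp p (q - r)"
  using zinvp_add zinvp_uminus by fastforce

lemma zinvp_ppow: "zinvp p (ppow p a)"
proof (cases "0 \<le> a")
  case True
  then have "ppow p a = of_int (int (p ^ nat a)) / of_nat p ^ 0" by (simp add: ppow_nat)
  then show ?thesis unfolding zinvp_def by blast
next
  case False
  then have "ppow p a = of_int 1 / of_nat p ^ nat (-a)"
    by (simp add: ppow_def power_int_def divide_inverse power_inverse)
  then show ?thesis unfolding zinvp_def by blast
qed

lemma zinvp_of_nat: "zinvp p (of_nat k)" using zinvp_int[of "int k"] by simp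

lemma zinvp_rmod: "zinvp p q \<Longrightarrow> zinvp p (rmod p q n)"
  unfolding rmod_def by (intro zinvp_diff zinvp_mult zinvp_ppow zinvp_int)

lemma zinvp_imp_pdvd: "zinvp p q \<Longrightarrow> \<exists>b. \<forall>n\<le>b. pdvd p n q"
proof -
  assume "zinvp p q"
  then obtain k m where q: "q = of_int k / of_nat p ^ m" unfolding zinvp_def by blast
  have "q = ppow p (- int m) * of_int k" unfolding q
    by (simp add: ppow_def power_int_minus divide_inverse)
  then have "pdvd p (- int m) q" unfolding pdvd_def by blast
  then show ?thesis using pdvd_mono by blast
qed

lemma Qp_zinvp: "x \<in> Qp p \<Longrightarrow> zinvp p (x n)" unfolding Qp_def by blast
lemma Qp_nonneg: "x \<in> Qp p \<Longrightarrow> 0 \<le> x n" unfolding Qp_def by blast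
lemma Qp_less_ppow: "x \<in> Qp p \<Longrightarrow> x n < ppow p n" unfolding Qp_def by blast
lemma Qp_coherent: "x \<in> Qp p \<Longrightarrow> x n = rmod p (x (n + 1)) n" unfolding Qp_def by blast
lemma Qp_low: "x \<in> Qp p \<Longrightarrow> \<exists>b. \<forall>n\<le>b. x n = 0" unfolding Qp_def by blast

lemma Qp_rmod_self: "x \<in> Qp p \<Longrightarrow> rmod p (x n) n = x n"
  using rmod_eq_self Qp_nonneg Qp_less_ppow by blast

lemma Qp_rmod_add: "x \<in> Qp p \<Longrightarrow> x n = rmod p (x (n + int d)) n"
proof (induction d)
  case 0 then show ?case using Qp_rmod_self by simp
next
  case (Suc d)
  have "x (n + int d) = rmod p (x (n + int d + 1)) (n + int d)" using Qp_coherent[OF Suc.prems] .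
  then have "rmod p (x (n + int d)) n = rmod p (x (n + int d + 1)) n"
    using rmod_rmod[of n "n + int d"] by simp
  moreover have "n + int (Suc d) = n + int d + 1" by simp
  ultimately show ?case using Suc by metis
qed

lemma Qp_rmod: "x \<in> Qp p \<Longrightarrow> n \<le> m \<Longrightarrow> x n = rmod p (x m) n"
  using Qp_rmod_add[of x n "nat (m - n)"] by simp

lemma Qp_pdvd_diff: "x \<in> Qp p \<Longrightarrow> n \<le> m \<Longrightarrow> pdvd p n (x m - x n)"
  using Qp_rmod[of x n m] Qp_rmod_self[of x n] rmod_eq_iff[of "x m" n "x n"] by simp

lemma Qp_zero_below: "x \<in> Qp p \<Longrightarrow> x n = 0 \<Longrightarrow> m \<le> n \<Longrightarrow> x m = 0"
  using Qp_rmod[of x m n] rmod_eq_self[of 0 m] ppow_pos[of m] by simp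

lemma Qp_pdvd_of_zero: "x \<in> Qp p \<Longrightarrow> x b = 0 \<Longrightarrow> pdvd p b (x m)"
proof (cases "m \<le> b")
  case True
  assume "x \<in> Qp p" "x b = 0"
  then have "x m = 0" using Qp_zero_below True by blast
  then show ?thesis by simp
next
  case False
  assume "x \<in> Qp p" "x b = 0"
  then have "rmod p (x m) b = 0" using Qp_rmod[of x b m] False by simp
  then show ?thesis using rmod_eq_0_iff by simp
qed

lemma Qp_eqI: "x \<in> Qp p \<Longrightarrow> y \<in> Qp p \<Longrightarrow> (\<And>n. pdvd p n (x n - y n)) \<Longrightarrow> x = y"
proof
  fix n assume "x \<in> Qp p" "y \<in> Qp p" "\<And>n. pdvd p n (x n - y n)"
  then show "x n = y n" using Qp_rmod_self[of x n] Qp_rmod_self[of y n] rmod_eq_iff[of "x n" n "y n"] by simp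
qed

lemma Qp_intro:
  assumes z: "\<And>n. zinvp p (w n)" and c: "\<And>n. pdvd p n (w (n + 1) - w n)"
    and l: "\<exists>b. \<forall>n\<le>b. pdvd p n (w n)"
  shows "(\<lambda>n. rmod p (w n) n) \<in> Qp p"
  unfolding Qp_def
proof (intro CollectI conjI allI)
  fix n
  show "zinvp p (rmod p (w n) n)" using zinvp_rmod z by blast
  show "0 \<le> rmod p (w n) n" "rmod p (w n) n < ppow p n" using rmod_bounds by auto
  have "rmod p (w (n + 1)) n = rmod p (w n) n" using c rmod_eq_iff by blast
  then show "rmod p (w n) n = rmod p (rmod p (w (n + 1)) (n + 1)) n"
    using rmod_rmod[of n "n + 1"] by simp
next
  from l obtain b where "\<forall>n\<le>b. pdvd p n (w n)" by blast
  then have "\<forall>n\<le>b. rmod p (w n) n = 0" using rmod_eq_0_iff by blast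
  then show "\<exists>b. \<forall>n\<le>b. rmod p (w n) n = 0" by blast
qed

lemma emb_Qp: "zinvp p q \<Longrightarrow> emb p q \<in> Qp p"
proof -
  assume q: "zinvp p q"
  have "(\<lambda>n. rmod p q n) \<in> Qp p" by (rule Qp_intro) (use q zinvp_imp_pdvd in auto)
  then show ?thesis unfolding emb_def .
qed

lemma Qp_bound_low: "x \<in> Qp p \<Longrightarrow> y \<in> Qp p \<Longrightarrow> \<exists>b. \<forall>n\<le>b. x n = 0 \<and> y n = 0"
proof -
  assume "x \<in> Qp p" "y \<in> Qp p"
  then obtain b1 b2 where "\<forall>n\<le>b1. x n = 0" "\<forall>n\<le>b2. y n = 0" using Qp_low by meson
  then show ?thesis by (intro exI[of _ "min b1 b2"]) auto
qed

lemma padd_Qp: "x \<in> Qp p \<Longrightarrow> y \<in> Qp p \<Longrightarrow> padd p x y \<in> Qp p"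
proof -
  assume x: "x \<in> Qp p" and y: "y \<in> Qp p"
  then obtain b where b: "\<forall>n\<le>b. x n = 0 \<and> y n = 0" using Qp_bound_low by blast
  have "(\<lambda>n. rmod p (x n + y n) n) \<in> Qp p"
  proof (rule Qp_intro)
    fix n
    show "zinvp p (x n + y n)" using x y by (intro zinvp_add Qp_zinvp)
    have e: "x (n + 1) + y (n + 1) - (x n + y n) = (x (n+1) - x n) + (y (n+1) - y n)" by simp
    show "pdvd p n (x (n + 1) + y (n + 1) - (x n + y n))" unfolding e
      using Qp_pdvd_diff[OF x, of n "n+1"] Qp_pdvd_diff[OF y, of n "n+1"] by (intro pdvd_add) auto
    show "\<exists>b. \<forall>n\<le>b. pdvd p n (x n + y n)" using b by (intro exI[of _ b]) simp
  qed
  then show ?thesis unfolding padd_def .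
qed

lemma pneg_Qp: "x \<in> Qp p \<Longrightarrow> pneg p x \<in> Qp p"
proof -
  assume x: "x \<in> Qp p"
  then obtain b where b: "\<forall>n\<le>b. x n = 0" using Qp_low by blast
  have "(\<lambda>n. rmod p (- x n) n) \<in> Qp p"
  proof (rule Qp_intro)
    fix n
    show "zinvp p (- x n)" using x by (intro zinvp_uminus Qp_zinvp)
    show "pdvd p n (- x (n + 1) - - x n)"
      using pdvd_uminus Qp_pdvd_diff[OF x, of n "n+1"] by fastforce
    show "\<exists>b. \<forall>n\<le>b. pdvd p n (- x n)" using b by (intro exI[of _ b]) simp
  qed
  then show ?thesis unfolding pneg_def .
qed

lemma psub_Qp: "x \<in> Qp p \<Longrightarrow> y \<in> Qp p \<Longrightarrow> psub p x y \<in> Qp p"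
  unfolding psub_def using padd_Qp pneg_Qp by blast

lemma padd_pdvd: "pdvd p n (padd p x y n - (x n + y n))"
  unfolding padd_def using rmod_pdvd by blast

lemma emb_pdvd: "pdvd p n (emb p q n - q)"
  unfolding emb_def using rmod_pdvd by blast

lemma psub_pdvd: "pdvd p n (psub p x y n - (x n - y n))"
proof -
  have a: "pdvd p n (psub p x y n - (x n + pneg p y n))" unfolding psub_def by (rule padd_pdvd)
  have b: "pdvd p n (pneg p y n - (- y n))" unfolding pneg_def using rmod_pdvd by blast
  have e: "psub p x y n - (x n - y n) = (psub p x y n - (x n + pneg p y n)) + (pneg p y n - (- y n))"
    by simp
  show ?thesis unfolding e by (rule pdvd_add[OF a b])
qed

text \<open>\<open>pdvd p n (x n - a)\<close> says that \<open>a\<close> represents \<open>x\<close> modulo \<open>p\<^sup>n\<int>\<^sub>p\<close>; the following rules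
  compute such representatives for compound expressions.\<close>

lemma padd_approx: "pdvd p n (x n - a) \<Longrightarrow> pdvd p n (y n - b) \<Longrightarrow> pdvd p n (padd p x y n - (a + b))"
proof -
  assume a: "pdvd p n (x n - a)" and b: "pdvd p n (y n - b)"
  have e: "padd p x y n - (a + b) = (padd p x y n - (x n + y n)) + (x n - a) + (y n - b)" by simp
  show ?thesis unfolding e by (intro pdvd_add padd_pdvd a b)
qed

lemma psub_approx: "pdvd p n (x n - a) \<Longrightarrow> pdvd p n (y n - b) \<Longrightarrow> pdvd p n (psub p x y n - (a - b))"
proof -
  assume a: "pdvd p n (x n - a)" and b: "pdvd p n (y n - b)"
  have e: "psub p x y n - (a - b) = (psub p x y n - (x n - y n)) + (x n - a) - (y n - b)" by simp
  show ?thesis unfolding e by (intro pdvd_add pdvd_diff psub_pdvd a b)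
qed

lemma approx_refl: "pdvd p n (x n - x n)" by simp

lemma Qp_approx: "x \<in> Qp p \<Longrightarrow> n \<le> m \<Longrightarrow> pdvd p n (x n - x m)"
  using Qp_pdvd_diff pdvd_diff_commute by blast

lemma pscale_approx: "pdvd p (n - a) (x (n - a) - q) \<Longrightarrow> pdvd p n (pscale p a x n - ppow p a * q)"
proof -
  assume "pdvd p (n - a) (x (n - a) - q)"
  from pdvd_ppow_mult[OF this, of a] show ?thesis unfolding pscale_def by (simp add: right_diff_distrib)
qed

lemma Qp_eqI_approx: "x \<in> Qp p \<Longrightarrow> y \<in> Qp p \<Longrightarrow> (\<And>n. pdvd p n (x n - q n)) \<Longrightarrow> (\<And>n. pdvd p n (y n - q n)) \<Longrightarrow> x = y"
proof (rule Qp_eqI)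
  fix n assume "x \<in> Qp p" "y \<in> Qp p" and a: "\<And>n. pdvd p n (x n - q n)" and b: "\<And>n. pdvd p n (y n - q n)"
  have "x n - y n = (x n - q n) - (y n - q n)" by simp
  then show "pdvd p n (x n - y n)" using pdvd_diff[OF a b] by simp
qed

lemma Qp_zero_of_pdvd: "x \<in> Qp p \<Longrightarrow> pdvd p n (x n) \<Longrightarrow> x n = 0"
  using Qp_rmod_self rmod_eq_0_iff by metis

lemma pscale_Qp: "x \<in> Qp p \<Longrightarrow> pscale p a x \<in> Qp p"
proof -
  assume x: "x \<in> Qp p"
  have eq: "pscale p a x = (\<lambda>n. rmod p (ppow p a * x (n - a)) n)"
  proof
    fix n
    have "rmod p (ppow p a * x (n - a)) n = ppow p a * x (n - a)"
      using rmod_ppow_mult[of a "x (n - a)" n] Qp_rmod_self[OF x, of "n - a"] by simp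
    then show "pscale p a x n = rmod p (ppow p a * x (n - a)) n" unfolding pscale_def by simp
  qed
  obtain b where b: "\<forall>n\<le>b. x n = 0" using Qp_low[OF x] by blast
  have "(\<lambda>n. rmod p (ppow p a * x (n - a)) n) \<in> Qp p"
  proof (rule Qp_intro)
    fix n
    show "zinvp p (ppow p a * x (n - a))" using x by (intro zinvp_mult zinvp_ppow Qp_zinvp)
    have h: "pdvd p (n - a) (x (n - a + 1) - x (n - a))" using Qp_pdvd_diff[OF x, of "n - a" "n - a + 1"] by simp
    have "pdvd p (n - a + a) (ppow p a * (x (n - a + 1) - x (n - a)))" using pdvd_ppow_mult[OF h] .
    then have "pdvd p n (ppow p a * (x (n - a + 1) - x (n - a)))" by simp
    moreover have "n + 1 - a = n - a + 1" by simp
    ultimately show "pdvd p n (ppow p a * x (n + 1 - a) - ppow p a * x (n - a))"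
      by (metis right_diff_distrib)
    show "\<exists>b. \<forall>n\<le>b. pdvd p n (ppow p a * x (n - a))" using b by (intro exI[of _ "b + a"]) simp
  qed
  then show ?thesis using eq by simp
qed

lemma lowb_zero: "x \<in> Qp p \<Longrightarrow> n \<le> lowb x \<Longrightarrow> x n = 0"
  unfolding lowb_def using someI_ex[OF Qp_low] by blast

lemma pmul_eq_rmod:
  assumes x: "x \<in> Qp p" and y: "y \<in> Qp p" and K: "n - min (lowb x) (lowb y) \<le> K"
  shows "pmul p x y n = rmod p (x K * y K) n"
proof -
  define m where "m = n - min (lowb x) (lowb y)"
  have pm: "pmul p x y n = rmod p (x m * y m) n" unfolding pmul_def m_def Let_def ..
  have mK: "m \<le> K" using K m_def by simp
  have d1: "pdvd p m (x K - x m)" "pdvd p m (y K - y m)" using Qp_pdvd_diff x y mK by auto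
  have d2: "pdvd p (lowb x) (x m)" "pdvd p (lowb y) (y K)"
    using Qp_pdvd_of_zero[OF x lowb_zero[OF x]] Qp_pdvd_of_zero[OF y lowb_zero[OF y]] by auto
  have e: "x K * y K - x m * y m = (x K - x m) * y K + x m * (y K - y m)" by (simp add: algebra_simps)
  have "pdvd p (m + lowb y) ((x K - x m) * y K)" using pdvd_mult[OF d1(1) d2(2)] .
  then have a: "pdvd p n ((x K - x m) * y K)" by (rule pdvd_mono[rotated]) (simp add: m_def)
  have "pdvd p (lowb x + m) (x m * (y K - y m))" using pdvd_mult[OF d2(1) d1(2)] .
  then have b: "pdvd p n (x m * (y K - y m))" by (rule pdvd_mono[rotated]) (simp add: m_def)
  have "pdvd p n (x K * y K - x m * y m)" unfolding e using pdvd_add[OF a b] .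
  then show ?thesis unfolding pm using rmod_eq_iff pdvd_diff_commute by simp
qed

lemma emb_ppow_at: "a < K \<Longrightarrow> emb p (ppow p a) K = ppow p a"
  unfolding emb_def using rmod_eq_self ppow_pos ppow_strict_mono by (simp add: less_imp_le)

lemma pmul_emb_ppow: "x \<in> Qp p \<Longrightarrow> pmul p (emb p (ppow p a)) x = pscale p a x"
proof
  fix n assume x: "x \<in> Qp p"
  have e: "emb p (ppow p a) \<in> Qp p" by (rule emb_Qp[OF zinvp_ppow])
  define K where "K = max (n - min (lowb (emb p (ppow p a))) (lowb x)) (max (a + 1) (n - a))"
  have "pmul p (emb p (ppow p a)) x n = rmod p (emb p (ppow p a) K * x K) n"
    by (rule pmul_eq_rmod[OF e x]) (simp add: K_def)
  also have "\<dots> = rmod p (ppow p a * x K) n" using emb_ppow_at[of a K] by (simp add: K_def)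
  also have "\<dots> = rmod p (ppow p a * x (n - a)) n"
  proof -
    have "pdvd p (n - a) (x K - x (n - a))" using Qp_pdvd_diff[OF x, of "n - a" K] by (simp add: K_def)
    from pdvd_ppow_mult[OF this, of a] have "pdvd p n (ppow p a * (x K - x (n - a)))" by simp
    then show ?thesis using rmod_eq_iff by (simp add: right_diff_distrib)
  qed
  also have "\<dots> = ppow p a * x (n - a)" using rmod_ppow_mult Qp_rmod_self[OF x] by simp
  finally show "pmul p (emb p (ppow p a)) x n = pscale p a x n" unfolding pscale_def .
qed

lemma pscale_pscale: "pscale p a (pscale p b x) = pscale p (a + b) x"
  unfolding pscale_def by (auto simp: ppow_add algebra_simps)

lemma pscale_0: "pscale p 0 x = x"
  unfolding pscale_def by simp

lemma Qp_valuation: "x \<in> Qp p \<Longrightarrow> x m \<noteq> 0 \<Longrightarrow> \<exists>G. (\<forall>n\<le>G. x n = 0) \<and> x (G + 1) \<noteq> 0"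
proof -
  assume x: "x \<in> Qp p" and m: "x m \<noteq> 0"
  obtain b0 where b0: "\<forall>n\<le>b0. x n = 0" using Qp_low[OF x] by blast
  have ex: "\<exists>d::nat. x (b0 + int d) \<noteq> 0"
  proof -
    have "b0 < m" using m b0 by (meson not_le)
    then have "b0 + int (nat (m - b0)) = m" by simp
    then show ?thesis using m by metis
  qed
  define d where "d = (LEAST d::nat. x (b0 + int d) \<noteq> 0)"
  have d1: "x (b0 + int d) \<noteq> 0" unfolding d_def using LeastI_ex[OF ex] .
  have d0: "d \<noteq> 0" using d1 b0 by (cases d) auto
  have d2: "x (b0 + int (d - 1)) = 0" using not_less_Least[of "d - 1" "\<lambda>d. x (b0 + int d) \<noteq> 0"] d0
    unfolding d_def[symmetric] by simp
  show ?thesis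
  proof (intro exI[of _ "b0 + int (d - 1)"] conjI allI impI)
    fix n assume "n \<le> b0 + int (d - 1)"
    then show "x n = 0" using Qp_zero_below[OF x d2] by blast
  next
    show "x (b0 + int (d - 1) + 1) \<noteq> 0" using d1 d0 by (simp add: of_nat_diff)
  qed
qed

lemma pnorm_le_ppow_iff: "x \<in> Qp p \<Longrightarrow> pnorm p x \<le> real_of_rat (ppow p l) \<longleftrightarrow> x (- l) = 0"
proof (cases "\<forall>n. x n = 0")
  case True
  then show ?thesis unfolding pnorm_def using ppow_pos[of l] by (simp add: zero_le_of_rat_iff less_imp_le)
next
  case False
  assume x: "x \<in> Qp p"
  then obtain m where "x m \<noteq> 0" using False by blast
  then obtain G where G1: "\<forall>n\<le>G. x n = 0" and G2: "x (G + 1) \<noteq> 0" using Qp_valuation[OF x] by blast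
  have gr: "(GREATEST b. \<forall>n\<le>b. x n = 0) = G"
  proof (rule Greatest_equality)
    show "\<forall>n\<le>G. x n = 0" by (rule G1)
    fix y assume yy: "\<forall>n\<le>y. x n = 0"
    show "y \<le> G"
    proof (rule ccontr)
      assume "\<not> y \<le> G" then have "G + 1 \<le> y" by simp
      then show False using yy G2 by blast
    qed
  qed
  have "pnorm p x = real_of_rat (ppow p (- G))" unfolding pnorm_def gr if_not_P[OF False] ..
  then have "pnorm p x \<le> real_of_rat (ppow p l) \<longleftrightarrow> - G \<le> l"
    using ppow_le_iff by (simp add: of_rat_less_eq)
  also have "\<dots> \<longleftrightarrow> x (- l) = 0"
  proof
    assume "- G \<le> l" then show "x (- l) = 0" using G1 by simp
  next
    assume "x (- l) = 0"
    show "- G \<le> l"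
    proof (rule ccontr)
      assume "\<not> - G \<le> l"
      then have "G + 1 \<le> - l" by simp
      then show False using Qp_zero_below[OF x \<open>x (- l) = 0\<close>] G2 by blast
    qed
  qed
  finally show ?thesis .
qed

lemma chi_eq_1: "pdvd p 0 (z 0) \<Longrightarrow> chi z = 1"
proof -
  assume "pdvd p 0 (z 0)"
  then obtain i where i: "z 0 = of_int i" unfolding pdvd_def by auto
  show ?thesis unfolding chi_def pfrac_def i by simp
qed

lemma pmul_emb_approx:
  assumes xi: "\<xi> \<in> Qp p" and q: "zinvp p q" and T: "pdvd p (- T) q"
  shows "pdvd p 0 (pmul p \<xi> (emb p q) 0 - \<xi> T * q)"
proof -
  have e: "emb p q \<in> Qp p" by (rule emb_Qp[OF q])
  define K where "K = max (0 - min (lowb \<xi>) (lowb (emb p q))) (max T (- lowb \<xi>))"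
  have pm: "pmul p \<xi> (emb p q) 0 = rmod p (\<xi> K * emb p q K) 0"
    by (rule pmul_eq_rmod[OF xi e]) (simp add: K_def)
  have a1: "pdvd p (lowb \<xi>) (\<xi> K)" using Qp_pdvd_of_zero[OF xi lowb_zero[OF xi]] by simp
  have a2: "pdvd p K (emb p q K - q)" by (rule emb_pdvd)
  have "pdvd p (lowb \<xi> + K) (\<xi> K * (emb p q K - q))" by (rule pdvd_mult[OF a1 a2])
  then have b1: "pdvd p 0 (\<xi> K * (emb p q K - q))" by (rule pdvd_mono[rotated]) (simp add: K_def)
  have "pdvd p T (\<xi> K - \<xi> T)" using Qp_pdvd_diff[OF xi, of T K] by (simp add: K_def)
  from pdvd_mult[OF this T] have b2: "pdvd p 0 ((\<xi> K - \<xi> T) * q)" by simp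
  have b3: "pdvd p 0 (rmod p (\<xi> K * emb p q K) 0 - \<xi> K * emb p q K)" by (rule rmod_pdvd)
  have "pmul p \<xi> (emb p q) 0 - \<xi> T * q
      = (rmod p (\<xi> K * emb p q K) 0 - \<xi> K * emb p q K) + (\<xi> K * (emb p q K - q) + (\<xi> K - \<xi> T) * q)"
    unfolding pm by (simp add: right_diff_distrib left_diff_distrib)
  then show ?thesis using pdvd_add[OF b3 pdvd_add[OF b1 b2]] by simp
qed

lemma pmul_commute: "pmul p x y = pmul p y x"
  unfolding pmul_def by (simp add: min.commute mult.commute)

lemma chi_pmul_eq_1:
  assumes w: "w \<in> Qp p" and x: "x \<in> Qp p" and wa: "w a = 0" and xa: "x (- a) = 0"
  shows "chi (pmul p w x) = 1"
proof -
  define K where "K = 0 - min (lowb w) (lowb x)"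
  have pm: "pmul p w x 0 = rmod p (w K * x K) 0" by (rule pmul_eq_rmod[OF w x]) (simp add: K_def)
  have "pdvd p (a + - a) (w K * x K)" using pdvd_mult[OF Qp_pdvd_of_zero[OF w wa] Qp_pdvd_of_zero[OF x xa]] .
  then have "rmod p (w K * x K) 0 = 0" using rmod_eq_0_iff by simp
  then show ?thesis using chi_eq_1[of "pmul p w x"] pm by simp
qed

lemma chi_pmul_padd_small:
  assumes xi: "\<xi> \<in> Qp p" and x: "x \<in> Qp p" and y: "y \<in> Qp p" and xl: "\<xi> l = 0" and yl: "y (- l) = 0"
  shows "chi (pmul p \<xi> (padd p x y)) = chi (pmul p \<xi> x)"
proof -
  have xy: "padd p x y \<in> Qp p" using x y padd_Qp by blast
  define K where "K = max (max (0 - min (lowb \<xi>) (lowb (padd p x y))) (0 - min (lowb \<xi>) (lowb x))) (- lowb \<xi>)"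
  have e1: "pmul p \<xi> (padd p x y) 0 = rmod p (\<xi> K * padd p x y K) 0"
    by (rule pmul_eq_rmod[OF xi xy]) (simp add: K_def)
  have e2: "pmul p \<xi> x 0 = rmod p (\<xi> K * x K) 0" by (rule pmul_eq_rmod[OF xi x]) (simp add: K_def)
  have "pdvd p (lowb \<xi> + K) (\<xi> K * (padd p x y K - (x K + y K)))"
    by (rule pdvd_mult[OF Qp_pdvd_of_zero[OF xi lowb_zero[OF xi]] padd_pdvd]) simp
  then have b1: "pdvd p 0 (\<xi> K * (padd p x y K - (x K + y K)))"
    by (rule pdvd_mono[rotated]) (simp add: K_def)
  have "pdvd p (l + - l) (\<xi> K * y K)" by (rule pdvd_mult[OF Qp_pdvd_of_zero[OF xi xl] Qp_pdvd_of_zero[OF y yl]])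
  then have b2: "pdvd p 0 (\<xi> K * y K)" by simp
  have "\<xi> K * padd p x y K - \<xi> K * x K = \<xi> K * (padd p x y K - (x K + y K)) + \<xi> K * y K"
    by (simp add: algebra_simps)
  then have "pdvd p 0 (\<xi> K * padd p x y K - \<xi> K * x K)" using pdvd_add[OF b1 b2] by simp
  then have "pmul p \<xi> (padd p x y) 0 = pmul p \<xi> x 0" unfolding e1 e2 using rmod_eq_iff by simp
  then show ?thesis unfolding chi_def pfrac_def by simp
qed

lemma zinvp_grid: "zinvp p (of_nat k * ppow p a)"
  by (intro zinvp_mult zinvp_of_nat zinvp_ppow)

lemma grid_Qp: "emb p (of_nat k * ppow p a) \<in> Qp p"
  by (rule emb_Qp[OF zinvp_grid])

lemma finite_Qp_common_zero: "finite F \<Longrightarrow> F \<subseteq> Qp p \<Longrightarrow> \<exists>T\<ge>T0. \<forall>a\<in>F. a (- T) = 0"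
proof (induction F arbitrary: T0 rule: finite_induct)
  case empty then show ?case by auto
next
  case (insert a F)
  have aQ: "a \<in> Qp p" using insert by auto
  obtain b where b: "\<forall>n\<le>b. a n = 0" using Qp_low[OF aQ] by blast
  obtain T where T: "T \<ge> max T0 (- b)" "\<forall>a\<in>F. a (- T) = 0" using insert by (meson insert_subset)
  have "a (- T) = 0" using b T by simp
  then show ?case using T by auto
qed

lemma pmul_inverse_p: "x \<in> Qp p \<Longrightarrow> pmul p (emb p (1 / of_nat p)) x = pscale p (-1) x"
  using pmul_emb_ppow[of x "-1"] ppow_minus_1 by simp

lemma e2pi_eq_1: "pdvd p 0 t \<Longrightarrow> e2pi t = 1"
proof -
  assume "pdvd p 0 t"
  then obtain i where "t = of_int i" unfolding pdvd_def by auto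
  then show ?thesis unfolding e2pi_def by simp
qed

lemma e2pi_cong: "pdvd p 0 (s - t) \<Longrightarrow> e2pi s = e2pi t"
proof -
  assume "pdvd p 0 (s - t)"
  then have "e2pi (s - t) = 1" by (rule e2pi_eq_1)
  then have "e2pi (t + (s - t)) = e2pi t" unfolding e2pi_add by simp
  then show ?thesis by simp
qed

lemma chi_pmul_emb: "\<xi> \<in> Qp p \<Longrightarrow> zinvp p q \<Longrightarrow> pdvd p (- T) q \<Longrightarrow> chi (pmul p \<xi> (emb p q)) = e2pi (\<xi> T * q)"
  unfolding chi_eq_e2pi using pmul_emb_approx e2pi_cong by blast

lemma chi_pmul_grid:
  "\<xi> \<in> Qp p \<Longrightarrow> chi (pmul p \<xi> (emb p (of_nat k * ppow p (- T)))) = e2pi (\<xi> T * (of_nat k * ppow p (- T)))"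
  by (rule chi_pmul_emb[OF _ zinvp_grid]) (auto simp: pdvd_def intro: exI[of _ "int k"])

lemma e2pi_mult_mod:
  assumes period: "pdvd p 0 (\<theta> * of_nat P)" and P: "0 < P"
  shows "e2pi (\<theta> * of_nat k) = e2pi (\<theta> * of_nat j) * e2pi (\<theta> * of_nat (nat ((int k - int j) mod int P)))"
proof -
  define t where "t = (int k - int j) div int P"
  have "int k = int j + int (nat ((int k - int j) mod int P)) + int P * t"
    unfolding t_def using P by simp
  then have "(of_nat k :: rat) = of_nat j + of_nat (nat ((int k - int j) mod int P)) + of_nat P * of_int t"
    by (metis of_int_add of_int_mult of_int_of_nat_eq)
  then have e: "\<theta> * of_nat k = (\<theta> * of_nat j + \<theta> * of_nat (nat ((int k - int j) mod int P))) + (\<theta> * of_nat P) * of_int t"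
    by (simp add: algebra_simps)
  have "pdvd p (0 + 0) ((\<theta> * of_nat P) * of_int t)" by (rule pdvd_mult[OF period pdvd_of_int])
  then have "e2pi ((\<theta> * of_nat P) * of_int t) = 1" by (intro e2pi_eq_1) simp
  then show ?thesis unfolding e e2pi_add by simp
qed

section \<open>Haar sums\<close>

lemma const_mod_ball_mono: "l' \<le> l \<Longrightarrow> const_mod_ball p f l \<Longrightarrow> const_mod_ball p f l'"
  unfolding const_mod_ball_def using ppow_mono[of l' l] by (meson of_rat_less_eq order_trans)

lemma supported_in_ball_mono: "N \<le> N' \<Longrightarrow> supported_in_ball p N f \<Longrightarrow> supported_in_ball p N' f"
  unfolding supported_in_ball_def using ppow_mono[of N N'] by (meson of_rat_less_eq order_trans)

lemma emb_add: "zinvp p q1 \<Longrightarrow> zinvp p q2 \<Longrightarrow> emb p (q1 + q2) = padd p (emb p q1) (emb p q2)"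
proof (rule Qp_eqI)
  assume q: "zinvp p q1" "zinvp p q2"
  show "emb p (q1 + q2) \<in> Qp p" by (rule emb_Qp) (use q zinvp_add in auto)
  show "padd p (emb p q1) (emb p q2) \<in> Qp p" using padd_Qp emb_Qp q by blast
  fix n
  have a: "pdvd p n (emb p (q1 + q2) n - (q1 + q2))" by (rule emb_pdvd)
  have b: "pdvd p n (padd p (emb p q1) (emb p q2) n - (emb p q1 n + emb p q2 n))" by (rule padd_pdvd)
  have c: "pdvd p n (emb p q1 n - q1)" "pdvd p n (emb p q2 n - q2)" by (rule emb_pdvd)+
  have e: "emb p (q1 + q2) n - padd p (emb p q1) (emb p q2) n =
     (emb p (q1 + q2) n - (q1 + q2)) - (padd p (emb p q1) (emb p q2) n - (emb p q1 n + emb p q2 n))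
     - (emb p q1 n - q1) - (emb p q2 n - q2)" by simp
  show "pdvd p n (emb p (q1 + q2) n - padd p (emb p q1) (emb p q2) n)" unfolding e
    by (intro pdvd_add pdvd_diff a b c)
qed

lemma pnorm_emb_le: "pdvd p (- l) q \<Longrightarrow> pnorm p (emb p q) \<le> real_of_rat (ppow p l)"
proof -
  assume "pdvd p (- l) q"
  then have "emb p q (- l) = 0" unfolding emb_def using rmod_eq_0_iff by simp
  moreover have "zinvp p q" using \<open>pdvd p (- l) q\<close> unfolding pdvd_def
    using zinvp_mult zinvp_ppow zinvp_int by blast
  ultimately show ?thesis using pnorm_le_ppow_iff emb_Qp by blast
qed

lemma haar_sum_refine:
  assumes lN: "l \<le> N" and c: "const_mod_ball p f l"
  shows "haar_sum p f N (l - 1) = haar_sum p f N l"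
proof -
  define d where "d = nat (N - l)"
  define r where "r k = emb p (of_nat k * ppow p (- N))" for k
  define S where "S = (\<Sum>k<p ^ d. f (r k))"
  have pd: "of_nat (p ^ d) * ppow p (- N) = ppow p (- l)"
    using ppow_nat[of "N - l"] lN ppow_add[of "N - l" "- N"] by (simp add: d_def)
  have nat1: "nat (N - (l - 1)) = Suc d" using lN by (simp add: d_def)
  have trm: "f (r (a + p ^ d * b)) = f (r a)" for a b
  proof -
    have "of_nat (a + p ^ d * b) * ppow p (- N) = of_nat a * ppow p (- N) + of_nat b * ppow p (- l)"
      using pd by (simp add: algebra_simps)
    then have "r (a + p ^ d * b) = padd p (r a) (emb p (of_nat b * ppow p (- l)))"
      unfolding r_def using emb_add zinvp_grid by metis
    moreover have "pnorm p (emb p (of_nat b * ppow p (- l))) \<le> real_of_rat (ppow p l)"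
      by (rule pnorm_emb_le) (unfold pdvd_def, rule exI[of _ "int b"], simp)
    ultimately show ?thesis using c grid_Qp unfolding const_mod_ball_def r_def by simp
  qed
  have "(\<Sum>k<p ^ nat (N - (l - 1)). f (r k)) = (\<Sum>b<p. \<Sum>a<p ^ d. f (r (a + p ^ d * b)))"
    unfolding nat1 power_Suc2 by (rule sum_lessThan_mult)
  also have "\<dots> = of_nat p * S" unfolding trm S_def by simp
  finally have sum: "(\<Sum>k<p ^ nat (N - (l - 1)). f (r k)) = of_nat p * S" .
  have pl: "ppow p l = ppow p (l - 1) * of_nat p" using ppow_add[of "l - 1" 1] ppow_1 by simp
  have "haar_sum p f N (l - 1) = of_real (real_of_rat (ppow p (l - 1))) * (of_nat p * S)"
    unfolding haar_sum_def sum[unfolded r_def] ..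
  also have "\<dots> = of_real (real_of_rat (ppow p l)) * S" unfolding pl by (simp add: of_rat_mult)
  finally show ?thesis unfolding haar_sum_def S_def r_def d_def .
qed

lemma emb_grid_digit:
  assumes a: "0 < a" "a < p"
  shows "emb p (of_nat (a + p * b) * ppow p (- (T + 1))) (- T) \<noteq> 0"
proof
  have pT: "ppow p (- T) = of_nat p * ppow p (- (T + 1))"
    using ppow_add[of 1 "- (T + 1)"] ppow_1 by simp
  assume "emb p (of_nat (a + p * b) * ppow p (- (T + 1))) (- T) = 0"
  then obtain i where "of_nat (a + p * b) * ppow p (- (T + 1)) = ppow p (- T) * of_int i"
    unfolding emb_def rmod_eq_0_iff pdvd_def by blast
  then have "of_nat (a + p * b) * ppow p (- (T + 1)) = (of_nat p * of_int i) * ppow p (- (T + 1))"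
    unfolding pT by (simp add: ac_simps)
  then have "(of_int (int (a + p * b)) :: rat) = of_int (int p * i)" using ppow_nonzero by simp
  then have "int (a + p * b) = int p * i" by (simp only: of_int_eq_iff)
  then have "int a = int p * (i - int b)" by (simp add: algebra_simps)
  then have "int p dvd int a" by (rule dvdI)
  then show False using a by (simp add: nat_dvd_not_less)
qed

lemma haar_sum_enlarge:
  assumes lN: "l \<le> N" and sp: "supported_in_ball p N f"
  shows "haar_sum p f (N + 1) l = haar_sum p f N l"
proof -
  define d where "d = nat (N - l)"
  define r where "r k = emb p (of_nat k * ppow p (- N))" for k
  define r' where "r' k = emb p (of_nat k * ppow p (- (N + 1)))" for k
  have nat1: "nat (N + 1 - l) = Suc d" using lN by (simp add: d_def)
  have pN: "ppow p (- N) = of_nat p * ppow p (- (N + 1))"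
    using ppow_add[of 1 "- (N + 1)"] ppow_1 by simp
  have z: "f (r' (a + p * b)) = 0" if a: "0 < a" "a < p" for a b
  proof (rule ccontr)
    assume "f (r' (a + p * b)) \<noteq> 0"
    then have "r' (a + p * b) (- N) = 0"
      using sp grid_Qp pnorm_le_ppow_iff unfolding supported_in_ball_def r'_def by blast
    then show False using emb_grid_digit[OF a] unfolding r'_def by blast
  qed
  have z0: "r' (0 + p * b) = r b" for b
    unfolding r'_def r_def pN by (simp add: ac_simps)
  have inner: "(\<Sum>a<p. f (r' (a + p * b))) = f (r b)" for b
  proof -
    have "(\<Sum>a<p. f (r' (a + p * b))) = f (r' (0 + p * b)) + (\<Sum>a\<in>{..<p} - {0}. f (r' (a + p * b)))"
      using p1 by (subst sum.remove[of _ 0]) auto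
    also have "(\<Sum>a\<in>{..<p} - {0}. f (r' (a + p * b))) = 0" using z by (intro sum.neutral) auto
    finally show ?thesis using z0 by simp
  qed
  have "(\<Sum>k<p ^ nat (N + 1 - l). f (r' k)) = (\<Sum>b<p ^ d. \<Sum>a<p. f (r' (a + p * b)))"
    unfolding nat1 power_Suc by (rule sum_lessThan_mult)
  also have "\<dots> = (\<Sum>b<p ^ d. f (r b))" unfolding inner ..
  finally show ?thesis unfolding haar_sum_def r_def r'_def d_def by simp
qed

lemma haar_sum_refine_iter:
  assumes "L \<le> l" "l \<le> N" "const_mod_ball p f l"
  shows "haar_sum p f N L = haar_sum p f N l"
proof -
  have "\<And>d. haar_sum p f N (l - int d) = haar_sum p f N l"
  proof -
    fix d show "haar_sum p f N (l - int d) = haar_sum p f N l"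
    proof (induction d)
      case 0 then show ?case by simp
    next
      case (Suc d)
      have "haar_sum p f N (l - int d - 1) = haar_sum p f N (l - int d)"
        by (rule haar_sum_refine) (use assms const_mod_ball_mono[of "l - int d" l f] in auto)
      then show ?case using Suc by (simp add: algebra_simps)
    qed
  qed
  from this[of "nat (l - L)"] show ?thesis using assms by simp
qed

lemma haar_sum_enlarge_iter:
  assumes "l \<le> N" "N \<le> N'" "supported_in_ball p N f"
  shows "haar_sum p f N' l = haar_sum p f N l"
proof -
  have "\<And>d. haar_sum p f (N + int d) l = haar_sum p f N l"
  proof -
    fix d show "haar_sum p f (N + int d) l = haar_sum p f N l"
    proof (induction d)
      case 0 then show ?case by simp
    next
      case (Suc d)
      have "haar_sum p f (N + int d + 1) l = haar_sum p f (N + int d) l"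
        by (rule haar_sum_enlarge) (use assms supported_in_ball_mono[of N "N + int d" f] in auto)
      then show ?case using Suc by (simp add: algebra_simps)
    qed
  qed
  from this[of "nat (N' - N)"] show ?thesis using assms by simp
qed

lemma tint_eq_haar_sum:
  assumes lN: "l \<le> N" and sp: "supported_in_ball p N f" and c: "const_mod_ball p f l"
  shows "tint p f = haar_sum p f N l"
proof -
  define P where "P I \<longleftrightarrow> (\<exists>N l::int. l \<le> N \<and> supported_in_ball p N f
       \<and> (\<forall>x\<in>Qp p. \<forall>y\<in>Qp p. pnorm p y \<le> real_of_rat (ppow p l) \<longrightarrow> f (padd p x y) = f x)
       \<and> I = of_real (real_of_rat (ppow p l)) *
             (\<Sum>k<p ^ nat (N - l). f (emb p (of_nat k * ppow p (- N)))))" for I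
  have t: "tint p f = (SOME I. P I)" unfolding tint_def P_def ..
  have "P (haar_sum p f N l)" unfolding P_def haar_sum_def using assms unfolding const_mod_ball_def by blast
  then have "P (tint p f)" unfolding t by (rule someI)
  then obtain N' l' where l': "l' \<le> N'" "supported_in_ball p N' f" "const_mod_ball p f l'"
    "tint p f = haar_sum p f N' l'" unfolding P_def const_mod_ball_def haar_sum_def by blast
  define L where "L = min l l'"
  define NN where "NN = max N N'"
  have "haar_sum p f N l = haar_sum p f N L" using haar_sum_refine_iter[of L l N f] assms by (simp add: L_def)
  also have "\<dots> = haar_sum p f NN L" using haar_sum_enlarge_iter[of L N NN f] assms by (simp add: L_def NN_def)
  also have "\<dots> = haar_sum p f N' L" using haar_sum_enlarge_iter[of L N' NN f] l' by (simp add: L_def NN_def)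
  also have "\<dots> = haar_sum p f N' l'" using haar_sum_refine_iter[of L l' N' f] l' by (simp add: L_def)
  finally show ?thesis using l' by simp
qed

lemma tint_cong:
  assumes "\<And>x. x \<in> Qp p \<Longrightarrow> f x = g x"
  shows "tint p f = tint p g"
proof -
  have s: "supported_in_ball p N f = supported_in_ball p N g" for N
    unfolding supported_in_ball_def using assms by auto
  have c: "(\<forall>x\<in>Qp p. \<forall>y\<in>Qp p. pnorm p y \<le> real_of_rat (ppow p l) \<longrightarrow> f (padd p x y) = f x) =
           (\<forall>x\<in>Qp p. \<forall>y\<in>Qp p. pnorm p y \<le> real_of_rat (ppow p l) \<longrightarrow> g (padd p x y) = g x)" for l
    using assms padd_Qp by auto
  have v: "(\<Sum>k<p ^ nat (N - l). f (emb p (of_nat k * ppow p (- N)))) =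
           (\<Sum>k<p ^ nat (N - l). g (emb p (of_nat k * ppow p (- N))))" for N l
    using assms grid_Qp by simp
  show ?thesis unfolding tint_def s c v ..
qed

lemma Qp_decompose_grid:
  assumes x: "x \<in> Qp p" and xT: "x (- T) = 0" and LT: "L \<le> T"
  obtains k z where "k < p ^ nat (T - L)" "z \<in> Qp p" "z (- L) = 0"
    "x = padd p (emb p (of_nat k * ppow p (- T))) z"
proof -
  obtain i where i: "x (- L) = ppow p (- T) * of_int i"
    using Qp_pdvd_of_zero[OF x xT] unfolding pdvd_def by blast
  have ii: "of_int i = x (- L) * ppow p T"
    using i ppow_add[of "- T" T] by (simp add: ac_simps)
  have "0 \<le> i" using ii Qp_nonneg[OF x, of "- L"] ppow_pos[of T]
    by (metis of_int_0_le_iff zero_le_mult_iff linorder_not_le less_imp_le)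
  have "x (- L) * ppow p T < ppow p (- L) * ppow p T"
    using Qp_less_ppow[OF x, of "- L"] ppow_pos[of T] by (intro mult_strict_right_mono) auto
  also have "\<dots> = of_nat (p ^ nat (T - L))"
    using ppow_add[of "- L" T] ppow_nat[of "T - L"] LT by simp
  finally have "i < int (p ^ nat (T - L))" using ii by (metis of_int_less_iff of_int_of_nat_eq)
  then have k: "nat i < p ^ nat (T - L)" using \<open>0 \<le> i\<close> nat_less_iff by blast
  define r where "r = emb p (x (- L))"
  have r: "r = emb p (of_nat (nat i) * ppow p (- T))"
    unfolding r_def i using \<open>0 \<le> i\<close> by (simp add: ac_simps)
  have rQ: "r \<in> Qp p" unfolding r by (rule grid_Qp)
  define z where "z = psub p x r"
  have zQ: "z \<in> Qp p" unfolding z_def using x rQ psub_Qp by blast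
  have "pdvd p (- L) (z (- L) - (x (- L) - x (- L)))" unfolding z_def r_def
    by (intro psub_approx approx_refl emb_pdvd)
  then have "z (- L) = 0" using Qp_zero_of_pdvd[OF zQ] by simp
  moreover have "x = padd p r z"
  proof (rule Qp_eqI_approx[where q=x])
    fix n
    have "pdvd p n (padd p r z n - (r n + (x n - r n)))" unfolding z_def
      by (intro padd_approx psub_approx approx_refl)
    then show "pdvd p n (padd p r z n - x n)" by simp
  qed (use x rQ zQ padd_Qp in auto)
  ultimately show ?thesis using that k zQ r by blast
qed

lemma tint_ge_value:
  assumes LT: "L \<le> T" and sp: "supported_in_ball p T f" and c: "const_mod_ball p f L"
    and nonneg: "\<And>y. y \<in> Qp p \<Longrightarrow> 0 \<le> Re (f y)" and x: "x \<in> Qp p" and xT: "x (- T) = 0"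
  shows "real_of_rat (ppow p L) * Re (f x) \<le> Re (tint p f)"
proof -
  obtain k z where k: "k < p ^ nat (T - L)" and z: "z \<in> Qp p" "z (- L) = 0"
    and xkz: "x = padd p (emb p (of_nat k * ppow p (- T))) z"
    using Qp_decompose_grid[OF x xT LT] .
  have "f x = f (emb p (of_nat k * ppow p (- T)))"
    using c grid_Qp z pnorm_le_ppow_iff unfolding xkz const_mod_ball_def by simp
  also have "real_of_rat (ppow p L) * Re \<dots>
      \<le> real_of_rat (ppow p L) * (\<Sum>j<p ^ nat (T - L). Re (f (emb p (of_nat j * ppow p (- T)))))"
    using k nonneg grid_Qp ppow_pos[of L]
    by (intro mult_left_mono member_le_sum) (auto simp: zero_le_of_rat_iff less_imp_le)
  also have "\<dots> = Re (tint p f)"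
    unfolding tint_eq_haar_sum[OF LT sp c] haar_sum_def by simp
  finally show ?thesis .
qed

end

section \<open>The refinement equation\<close>

locale DNM_fun = padic_base +
  fixes N M :: int and \<phi> :: "padic \<Rightarrow> complex"
  assumes N0: "0 \<le> N" and dnm: "DNM p N M \<phi>"
begin

lemma phi_periodic: "x \<in> Qp p \<Longrightarrow> \<phi> (padd p x (emb p (ppow p M))) = \<phi> x"
  using dnm unfolding DNM_def by blast

lemma phi_supported: "supported_in_ball p N \<phi>" using dnm unfolding DNM_def by blast

lemma phi_support_digit: "x \<in> Qp p \<Longrightarrow> \<phi> x \<noteq> 0 \<Longrightarrow> x (- N) = 0"
  using phi_supported pnorm_le_ppow_iff unfolding supported_in_ball_def by blast

lemma phi_locally_constant: "x \<in> Qp p \<Longrightarrow> \<exists>l. \<forall>y\<in>Qp p. pnorm p y \<le> real_of_rat (ppow p l) \<longrightarrow> \<phi> (padd p x y) = \<phi> x"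
  using dnm unfolding DNM_def test_fun_def locally_constant_def by blast

lemma phi_periodic_mult: "w \<in> Qp p \<Longrightarrow> \<phi> (padd p w (emb p (of_nat n * ppow p M))) = \<phi> w"
proof (induction n)
  case 0
  have e0: "emb p 0 \<in> Qp p" by (rule emb_Qp) (use zinvp_int[of 0] in simp)
  have "padd p w (emb p 0) = w"
  proof (rule Qp_eqI_approx[where q="\<lambda>n. w n"])
    show "padd p w (emb p 0) \<in> Qp p" using 0 e0 padd_Qp by blast
    show "w \<in> Qp p" by (rule 0)
    fix n
    have "pdvd p n (padd p w (emb p 0) n - (w n + 0))" by (intro padd_approx approx_refl emb_pdvd)
    then show "pdvd p n (padd p w (emb p 0) n - w n)" by simp
    show "pdvd p n (w n - w n)" by simp
  qed
  then show ?case by simp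
next
  case (Suc n)
  have w1: "padd p w (emb p (of_nat n * ppow p M)) \<in> Qp p" using Suc.prems padd_Qp emb_Qp zinvp_grid by blast
  have "padd p w (emb p (of_nat (Suc n) * ppow p M)) = padd p (padd p w (emb p (of_nat n * ppow p M))) (emb p (ppow p M))"
  proof (rule Qp_eqI_approx[where q="\<lambda>k. w k + of_nat (Suc n) * ppow p M"])
    show "padd p w (emb p (of_nat (Suc n) * ppow p M)) \<in> Qp p" using Suc.prems padd_Qp emb_Qp zinvp_grid by blast
    show "padd p (padd p w (emb p (of_nat n * ppow p M))) (emb p (ppow p M)) \<in> Qp p"
      using w1 padd_Qp emb_Qp zinvp_ppow by blast
    fix k
    show "pdvd p k (padd p w (emb p (of_nat (Suc n) * ppow p M)) k - (w k + of_nat (Suc n) * ppow p M))"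
      by (intro padd_approx approx_refl emb_pdvd)
    have "pdvd p k (padd p (padd p w (emb p (of_nat n * ppow p M))) (emb p (ppow p M)) k - ((w k + of_nat n * ppow p M) + ppow p M))"
      by (intro padd_approx approx_refl emb_pdvd)
    then show "pdvd p k (padd p (padd p w (emb p (of_nat n * ppow p M))) (emb p (ppow p M)) k - (w k + of_nat (Suc n) * ppow p M))"
      by (simp add: algebra_simps)
  qed
  then show ?case using phi_periodic[OF w1] Suc by simp
qed

text \<open>Write \<open>y = z + t\<close> with \<open>z\<close> as small as the local constancy of \<open>\<phi>\<close> at \<open>x\<close> requires and
  \<open>t\<close> a non-negative integer multiple of the period \<open>p\<^sup>M\<close>.\<close>
lemma phi_padd_ball:
  assumes x: "x \<in> Qp p" and y: "y \<in> Qp p" and yM: "y M = 0"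
  shows "\<phi> (padd p x y) = \<phi> x"
proof -
  obtain l where l: "\<forall>y\<in>Qp p. pnorm p y \<le> real_of_rat (ppow p l) \<longrightarrow> \<phi> (padd p x y) = \<phi> x"
    using phi_locally_constant[OF x] by blast
  define K where "K = max M (- l)"
  define t where "t = y K"
  have "pdvd p M t" unfolding t_def by (rule Qp_pdvd_of_zero[OF y yM])
  then obtain i where i: "t = ppow p M * of_int i" unfolding pdvd_def by blast
  have "0 \<le> t" unfolding t_def by (rule Qp_nonneg[OF y])
  then have "0 \<le> i" using i ppow_pos[of M] by (simp add: zero_le_mult_iff)
  then have tn: "t = of_nat (nat i) * ppow p M" using i by simp
  have tz: "zinvp p t" unfolding tn by (rule zinvp_grid)
  define z where "z = padd p y (emb p (- t))"
  have z: "z \<in> Qp p" unfolding z_def using y emb_Qp zinvp_uminus tz padd_Qp by blast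
  have "pdvd p (- l) (z (- l) - (y K + - t))" unfolding z_def
    by (intro padd_approx emb_pdvd Qp_approx[OF y]) (simp add: K_def)
  then have "z (- l) = 0" using Qp_zero_of_pdvd[OF z] unfolding t_def by simp
  then have "pnorm p z \<le> real_of_rat (ppow p l)" using pnorm_le_ppow_iff[OF z] by simp
  then have phz: "\<phi> (padd p x z) = \<phi> x" using l z by blast
  have xz: "padd p x z \<in> Qp p" using x z padd_Qp by blast
  have "padd p x y = padd p (padd p x z) (emb p t)"
  proof (rule Qp_eqI_approx[where q="\<lambda>k. x k + y k"])
    show "padd p x y \<in> Qp p" using x y padd_Qp by blast
    show "padd p (padd p x z) (emb p t) \<in> Qp p" using xz emb_Qp[OF tz] padd_Qp by blast
    fix k
    show "pdvd p k (padd p x y k - (x k + y k))" by (rule padd_pdvd)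
    have "pdvd p k (padd p (padd p x z) (emb p t) k - ((x k + (y k + - t)) + t))" unfolding z_def
      by (intro padd_approx approx_refl emb_pdvd)
    then show "pdvd p k (padd p (padd p x z) (emb p t) k - (x k + y k))" by simp
  qed
  then show ?thesis using phi_periodic_mult[OF xz, of "nat i"] phz tn by simp
qed

definition node :: "nat \<Rightarrow> rat" where "node k = of_nat k / of_nat p ^ (nat N + 1)"

lemma ppow_Suc_N: "ppow p (N + 1) = of_nat (p ^ (nat N + 1))"
  using ppow_nat[of "N + 1"] N0 by (simp add: nat_add_distrib)

lemma node_eq: "node k = of_nat k * ppow p (- (N + 1))"
proof -
  have inv: "ppow p (- (N + 1)) * ppow p (N + 1) = 1" using ppow_add[of "- (N + 1)" "N + 1"] by simp
  then have "ppow p (- (N + 1)) = 1 / ppow p (N + 1)" using ppow_nonzero by (simp add: eq_divide_eq)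
  then show ?thesis unfolding node_def ppow_Suc_N by simp
qed

lemma zinvp_node: "zinvp p (node k)" unfolding node_eq by (rule zinvp_grid)

lemma emb_node_Qp: "emb p (node k) \<in> Qp p" by (rule emb_Qp[OF zinvp_node])

lemma pdvd_node: "pdvd p (- (N + 1)) (node k)"
  unfolding node_eq pdvd_def by (rule exI[of _ "int k"]) simp

lemma emb_node_low: "emb p (node k) (- (N + 1)) = 0"
  using pdvd_node rmod_eq_0_iff unfolding emb_def by simp

lemma node_bounds: "k < p ^ (nat N + 1) \<Longrightarrow> 0 \<le> node k \<and> node k < 1"
proof -
  assume k: "k < p ^ (nat N + 1)"
  have "(of_nat k :: rat) < of_nat (p ^ (nat N + 1))" using k by (simp only: of_nat_less_iff)
  then have "of_nat k < ppow p (N + 1)" using ppow_Suc_N by simp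
  moreover have "ppow p (- (N + 1)) * ppow p (N + 1) = 1" using ppow_add[of "- (N + 1)" "N + 1"] by simp
  ultimately have "of_nat k * ppow p (- (N + 1)) < 1"
    by (metis mult.commute mult_strict_left_mono ppow_pos)
  moreover have "0 \<le> of_nat k * ppow p (- (N + 1))" using ppow_pos by (simp add: less_imp_le)
  ultimately show ?thesis unfolding node_eq by simp
qed

lemma emb_node_0: "k < p ^ (nat N + 1) \<Longrightarrow> emb p (node k) 0 = node k"
  unfolding emb_def using node_bounds rmod_eq_self by simp

lemma emb_node_Ip: "k < p ^ (nat N + 1) \<Longrightarrow> emb p (node k) \<in> Ip p"
  unfolding Ip_def pfrac_def using emb_node_0 emb_node_Qp by simp

lemma inj_on_emb_node: "inj_on (\<lambda>k. emb p (node k)) {..<p ^ (nat N + 1)}"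
proof (rule inj_onI)
  fix k k' assume "k \<in> {..<p ^ (nat N + 1)}" "k' \<in> {..<p ^ (nat N + 1)}" "emb p (node k) = emb p (node k')"
  then have "node k = node k'" using emb_node_0 by (metis lessThan_iff)
  then show "k = k'" unfolding node_def using p1 by simp
qed

lemma Ip_eq_emb_node: "a \<in> Ip p \<Longrightarrow> a (- (N + 1)) = 0 \<Longrightarrow> \<exists>k<p ^ (nat N + 1). a = emb p (node k)"
proof -
  assume a: "a \<in> Ip p" and z: "a (- (N + 1)) = 0"
  have aQ: "a \<in> Qp p" and ae: "emb p (a 0) = a" using a unfolding Ip_def pfrac_def by auto
  have "pdvd p (- (N + 1)) (a 0)" using Qp_pdvd_of_zero[OF aQ z] .
  then obtain i where i: "a 0 = ppow p (- (N + 1)) * of_int i" unfolding pdvd_def by blast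
  have a0: "0 \<le> a 0" "a 0 < 1" using Qp_nonneg[OF aQ] Qp_less_ppow[OF aQ, of 0] by auto
  have inv: "ppow p (- (N + 1)) * ppow p (N + 1) = 1" using ppow_add[of "- (N + 1)" "N + 1"] by simp
  have ai: "of_int i = a 0 * ppow p (N + 1)" using i inv by (simp add: ac_simps)
  have "0 \<le> i" using ai a0 ppow_pos[of "N+1"] by (metis of_int_0_le_iff zero_le_mult_iff linorder_not_le less_imp_le)
  have "a 0 * ppow p (N + 1) < 1 * ppow p (N + 1)" using a0 ppow_pos[of "N+1"] by (intro mult_strict_right_mono) auto
  then have "(of_int i :: rat) < of_nat (p ^ (nat N + 1))" using ai ppow_Suc_N by simp
  then have "i < int (p ^ (nat N + 1))" by (metis of_int_less_iff of_int_of_nat_eq)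
  then have k: "nat i < p ^ (nat N + 1)" using \<open>0 \<le> i\<close> nat_less_iff by blast
  have "node (nat i) = a 0" unfolding node_eq using i \<open>0 \<le> i\<close> by (simp add: ac_simps)
  then show ?thesis using k ae by metis
qed

lemma pscale_minus_1_approx: "pdvd p n (pscale p (-1) x n - ppow p (-1) * x (n + 1))"
  unfolding pscale_def by simp

lemma psub_pscale_padd:
  assumes x: "x \<in> Qp p" and y: "y \<in> Qp p" and a: "a \<in> Qp p"
  shows "psub p (pscale p (-1) (padd p x y)) a = padd p (psub p (pscale p (-1) x) a) (pscale p (-1) y)"
proof (rule Qp_eqI_approx[where q="\<lambda>n. ppow p (-1) * (x (n + 1) + y (n + 1)) - a n"])
  show "psub p (pscale p (-1) (padd p x y)) a \<in> Qp p" using x y a padd_Qp pscale_Qp psub_Qp by blast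
  show "padd p (psub p (pscale p (-1) x) a) (pscale p (-1) y) \<in> Qp p" using x y a padd_Qp pscale_Qp psub_Qp by blast
  fix n
  have m: "pdvd p n (pscale p (-1) (padd p x y) n - ppow p (-1) * (x (n + 1) + y (n + 1)))"
    using pscale_approx[of n "-1" "padd p x y" "x (n + 1) + y (n + 1)"] padd_pdvd by simp
  show "pdvd p n (psub p (pscale p (-1) (padd p x y)) a n - (ppow p (-1) * (x (n + 1) + y (n + 1)) - a n))"
    by (intro psub_approx m approx_refl)
  have "pdvd p n (padd p (psub p (pscale p (-1) x) a) (pscale p (-1) y) n -
      ((ppow p (-1) * x (n + 1) - a n) + ppow p (-1) * y (n + 1)))"
    by (intro padd_approx psub_approx approx_refl pscale_minus_1_approx)
  then show "pdvd p n (padd p (psub p (pscale p (-1) x) a) (pscale p (-1) y) n - (ppow p (-1) * (x (n + 1) + y (n + 1)) - a n))"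
    by (simp add: algebra_simps)
qed

lemma phi_refined_digit_iff:
  assumes x: "x \<in> Qp p" and a: "a \<in> Qp p" and NT: "N \<le> T"
    and nz: "\<phi> (psub p (pscale p (-1) x) a) \<noteq> 0"
  shows "x (1 - T) = 0 \<longleftrightarrow> a (- T) = 0"
proof -
  define w where "w = psub p (pscale p (-1) x) a"
  have w: "w \<in> Qp p" unfolding w_def using pscale_Qp x a psub_Qp by blast
  have "\<phi> w \<noteq> 0" using nz unfolding w_def .
  then have "w (- T) = 0" using phi_support_digit[OF w] Qp_zero_below[OF w, of "- N" "- T"] NT by simp
  moreover have "pdvd p (- T) (w (- T) - (ppow p (-1) * x (- T + 1) - a (- T)))"
    unfolding w_def by (intro psub_approx approx_refl pscale_minus_1_approx)
  ultimately have "pdvd p (- T) (a (- T) - ppow p (-1) * x (1 - T))" by simp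
  then have d: "pdvd p (- T) (ppow p (-1) * x (1 - T) - a (- T))" using pdvd_diff_commute by blast
  have "x (1 - T) = 0 \<longleftrightarrow> pdvd p (1 - T + -1) (ppow p (-1) * x (1 - T))"
    using Qp_zero_of_pdvd[OF x] pdvd_ppow_mult_iff[of "1 - T" "-1" "x (1 - T)"] by auto
  also have "\<dots> \<longleftrightarrow> pdvd p (- T) (a (- T))" using pdvd_cong[OF d] by simp
  also have "\<dots> \<longleftrightarrow> a (- T) = 0" using Qp_zero_of_pdvd[OF a] by auto
  finally show ?thesis .
qed

lemma phi_refined_outside:
  assumes x: "x \<in> Qp p" and xN: "x (- N) \<noteq> 0"
  shows "\<phi> (psub p (pscale p (-1) x) (emb p (node k))) = 0"
proof (rule ccontr)
  assume nz: "\<phi> (psub p (pscale p (-1) x) (emb p (node k))) \<noteq> 0"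
  have "N \<le> N + 1" by simp
  from phi_refined_digit_iff[OF x emb_node_Qp this nz] show False using xN emb_node_low by simp
qed

lemma phi_refined_far:
  assumes x: "x \<in> Qp p" and xN: "x (- N) = 0" and a: "a \<in> Qp p" and aN: "a (- (N + 1)) \<noteq> 0"
  shows "\<phi> (psub p (pscale p (-1) x) a) = 0"
proof (rule ccontr)
  assume nz: "\<phi> (psub p (pscale p (-1) x) a) \<noteq> 0"
  have "N \<le> N + 1" by simp
  from phi_refined_digit_iff[OF x a this nz] show False using xN aN by simp
qed

definition refinement_residual :: "(padic \<Rightarrow> complex) \<Rightarrow> padic set \<Rightarrow> padic \<Rightarrow> complex" where
  "refinement_residual \<alpha> F x = \<phi> x - (\<Sum>a\<in>F. \<alpha> a * \<phi> (psub p (pscale p (-1) x) a))"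

lemma refinement_residual_supported:
  assumes F: "F \<subseteq> Qp p" and NT: "N \<le> T" and FT: "\<forall>a\<in>F. a (- T) = 0"
  shows "supported_in_ball p T (refinement_residual \<alpha> F)"
  unfolding supported_in_ball_def
proof (intro ballI impI)
  fix x assume x: "x \<in> Qp p" and nz: "refinement_residual \<alpha> F x \<noteq> 0"
  have "x (- T) = 0"
  proof (rule ccontr)
    assume xT: "x (- T) \<noteq> 0"
    then have "x (- N) \<noteq> 0" using Qp_zero_below[OF x, of "- N" "- T"] NT by auto
    then have "\<phi> x = 0" using phi_support_digit[OF x] by blast
    moreover have "\<phi> (psub p (pscale p (-1) x) a) = 0" if a: "a \<in> F" for a
    proof (rule ccontr)
      assume "\<phi> (psub p (pscale p (-1) x) a) \<noteq> 0"
      from phi_refined_digit_iff[OF x _ NT this] have "x (1 - T) = 0" using F FT a by blast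
      then show False using Qp_zero_below[OF x, of "1 - T" "- T"] xT by simp
    qed
    ultimately show False using nz unfolding refinement_residual_def by simp
  qed
  then show "pnorm p x \<le> real_of_rat (ppow p T)" using pnorm_le_ppow_iff[OF x] by simp
qed

lemma refinement_residual_const:
  assumes F: "F \<subseteq> Qp p"
  shows "const_mod_ball p (refinement_residual \<alpha> F) (- M - 1)"
  unfolding const_mod_ball_def
proof (intro ballI impI)
  fix x y assume x: "x \<in> Qp p" and y: "y \<in> Qp p"
    and "pnorm p y \<le> real_of_rat (ppow p (- M - 1))"
  then have yM1: "y (M + 1) = 0" using pnorm_le_ppow_iff[OF y] by (simp add: add.commute)
  then have yM: "y M = 0" using Qp_zero_below[OF y] by simp
  have yM': "pscale p (-1) y M = 0" unfolding pscale_def using yM1 by simp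
  have "\<phi> (psub p (pscale p (-1) (padd p x y)) a) = \<phi> (psub p (pscale p (-1) x) a)"
    if "a \<in> F" for a
  proof -
    have a: "a \<in> Qp p" using F that by blast
    have "psub p (pscale p (-1) x) a \<in> Qp p" "pscale p (-1) y \<in> Qp p"
      using x y a pscale_Qp psub_Qp by blast+
    then show ?thesis unfolding psub_pscale_padd[OF x y a] using phi_padd_ball yM' by blast
  qed
  then show "refinement_residual \<alpha> F (padd p x y) = refinement_residual \<alpha> F x"
    unfolding refinement_residual_def phi_padd_ball[OF x y yM] by simp
qed

lemma refinement_residual_nodes:
  assumes x: "x \<in> Qp p" "x (- N) = 0" and F: "finite F" "F \<subseteq> Ip p"
    and nodes: "(\<lambda>k. emb p (node k)) ` {..<p ^ (nat N + 1)} \<subseteq> F"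
  shows "refinement_residual \<alpha> F x = \<phi> x -
    (\<Sum>k<p ^ (nat N + 1). \<alpha> (emb p (node k)) * \<phi> (psub p (pscale p (-1) x) (emb p (node k))))"
proof -
  have "(\<Sum>a\<in>F. \<alpha> a * \<phi> (psub p (pscale p (-1) x) a))
      = (\<Sum>a\<in>(\<lambda>k. emb p (node k)) ` {..<p ^ (nat N + 1)}. \<alpha> a * \<phi> (psub p (pscale p (-1) x) a))"
  proof (rule sum.mono_neutral_right[OF F(1) nodes], intro ballI)
    fix a assume a: "a \<in> F - (\<lambda>k. emb p (node k)) ` {..<p ^ (nat N + 1)}"
    then have "a \<in> Ip p" using F by auto
    then have "a (- (N + 1)) \<noteq> 0" using Ip_eq_emb_node a by blast
    then show "\<alpha> a * \<phi> (psub p (pscale p (-1) x) a) = 0"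
      using phi_refined_far[OF x] \<open>a \<in> Ip p\<close> unfolding Ip_def by simp
  qed
  also have "\<dots> = (\<Sum>k<p ^ (nat N + 1). \<alpha> (emb p (node k)) * \<phi> (psub p (pscale p (-1) x) (emb p (node k))))"
    by (rule sum.reindex[OF inj_on_emb_node, unfolded comp_def])
  finally show ?thesis unfolding refinement_residual_def by simp
qed

definition refinement_coeffs :: "(nat \<Rightarrow> complex) \<Rightarrow> bool" where
  "refinement_coeffs h \<longleftrightarrow>
     (\<forall>x\<in>Qp p. \<phi> x = (\<Sum>k<p ^ (nat N + 1). h k * \<phi> (psub p (pscale p (-1) x) (emb p (node k)))))"

text \<open>An \<open>L\<^sup>2\<close>-convergent refinement series collapses to the finite refinement equation: a
  pointwise defect at \<open>x\<^sub>0\<close> would persist on the whole coset \<open>x\<^sub>0 + B\<^bsub>-M-1\<^esub>(0)\<close>,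
  on which every residual is constant, keeping the \<open>L\<^sup>2\<close> error away from zero.\<close>
lemma refinement_equation:
  assumes "refinable p \<phi>"
  shows "\<exists>h. refinement_coeffs h"
proof -
  obtain \<alpha> where \<alpha>: "\<forall>\<epsilon>>0. \<exists>F0. finite F0 \<and> F0 \<subseteq> Ip p \<and>
     (\<forall>F. finite F \<and> F0 \<subseteq> F \<and> F \<subseteq> Ip p \<longrightarrow>
        Re (tint p (\<lambda>x. complex_of_real ((cmod (\<phi> x -
             (\<Sum>a\<in>F. \<alpha> a * \<phi> (psub p (pmul p (emb p (1 / of_nat p)) x) a))))\<^sup>2))) < \<epsilon>)"
    using assms unfolding refinable_def by (elim exE)
  define C where "C = (\<lambda>k. emb p (node k)) ` {..<p ^ (nat N + 1)}"
  define P where "P x = (\<Sum>k<p ^ (nat N + 1). \<alpha> (emb p (node k)) * \<phi> (psub p (pscale p (-1) x) (emb p (node k))))" for x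
  have "\<phi> x = P x" if x: "x \<in> Qp p" for x
  proof (cases "x (- N) = 0")
    case False
    then show ?thesis using phi_support_digit[OF x] phi_refined_outside[OF x] by (auto simp: P_def)
  next
    case xN: True
    show ?thesis
    proof (rule ccontr)
      assume "\<phi> x \<noteq> P x"
      define L where "L = - M - 1"
      define \<delta> where "\<delta> = (cmod (\<phi> x - P x))\<^sup>2"
      have "0 < real_of_rat (ppow p L) * \<delta>"
        unfolding \<delta>_def using \<open>\<phi> x \<noteq> P x\<close> ppow_pos[of L] by (simp add: zero_less_of_rat_iff)
      from \<alpha>[rule_format, OF this] obtain F0 where F0: "finite F0" "F0 \<subseteq> Ip p"
        and small: "\<forall>F. finite F \<and> F0 \<subseteq> F \<and> F \<subseteq> Ip p \<longrightarrow>
          Re (tint p (\<lambda>x. complex_of_real ((cmod (\<phi> x -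
             (\<Sum>a\<in>F. \<alpha> a * \<phi> (psub p (pmul p (emb p (1 / of_nat p)) x) a))))\<^sup>2))) < real_of_rat (ppow p L) * \<delta>"
        by (elim exE conjE)
      define F where "F = F0 \<union> C"
      have F: "finite F" "F \<subseteq> Ip p" "F \<subseteq> Qp p"
        using F0 emb_node_Ip unfolding F_def C_def Ip_def by auto
      define g where "g y = complex_of_real ((cmod (refinement_residual \<alpha> F y))\<^sup>2)" for y
      have "tint p g = tint p (\<lambda>x. complex_of_real ((cmod (\<phi> x -
             (\<Sum>a\<in>F. \<alpha> a * \<phi> (psub p (pmul p (emb p (1 / of_nat p)) x) a))))\<^sup>2))"
        by (rule tint_cong) (simp add: g_def refinement_residual_def pmul_inverse_p)
      then have "Re (tint p g) < real_of_rat (ppow p L) * \<delta>"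
        using small F(1,2) by (simp add: F_def)
      moreover obtain T where T: "max N L \<le> T" "\<forall>a\<in>F. a (- T) = 0"
        using finite_Qp_common_zero[OF F(1,3)] by blast
      have sp: "supported_in_ball p T g"
        using refinement_residual_supported[OF F(3) _ T(2)] T(1)
        unfolding supported_in_ball_def g_def by auto
      have ca: "const_mod_ball p g L"
        using refinement_residual_const[OF F(3)] unfolding const_mod_ball_def g_def L_def by simp
      have "g x = complex_of_real \<delta>"
        using refinement_residual_nodes[OF x xN F(1,2)] unfolding g_def \<delta>_def P_def F_def C_def by simp
      moreover have "real_of_rat (ppow p L) * Re (g x) \<le> Re (tint p g)"
        by (rule tint_ge_value[OF _ sp ca _ x]) (use T Qp_zero_below[OF x xN, of "- T"] in \<open>auto simp: g_def\<close>)
      ultimately show False by simp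
    qed
  qed
  then show ?thesis unfolding refinement_coeffs_def P_def by (intro exI[of _ "\<lambda>k. \<alpha> (emb p (node k))"]) blast
qed

section \<open>The Fourier transform\<close>

lemma const_mod_ball_phat_integrand:
  assumes xi: "\<xi> \<in> Qp p" and lM: "l \<le> - M" and xl: "\<xi> l = 0"
  shows "const_mod_ball p (\<lambda>x. chi (pmul p \<xi> x) * \<phi> x) l"
  unfolding const_mod_ball_def
proof (intro ballI impI)
  fix x y assume x: "x \<in> Qp p" and y: "y \<in> Qp p" and "pnorm p y \<le> real_of_rat (ppow p l)"
  then have yl: "y (- l) = 0" using pnorm_le_ppow_iff[OF y] by simp
  then have "y M = 0" using Qp_zero_below[OF y] lM by simp
  then show "chi (pmul p \<xi> (padd p x y)) * \<phi> (padd p x y) = chi (pmul p \<xi> x) * \<phi> x"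
    using phi_padd_ball chi_pmul_padd_small[OF xi x y xl yl] x y by simp
qed

lemma supported_phat_integrand: "N \<le> N' \<Longrightarrow> supported_in_ball p N' (\<lambda>x. chi (pmul p \<xi> x) * \<phi> x)"
  using supported_in_ball_mono[OF _ phi_supported] unfolding supported_in_ball_def by fastforce

lemma phat_eq_haar_sum:
  assumes xi: "\<xi> \<in> Qp p" and "L \<le> - M" "L \<le> N'" "N \<le> N'" "\<xi> L = 0"
  shows "phat p \<phi> \<xi> = haar_sum p (\<lambda>x. chi (pmul p \<xi> x) * \<phi> x) N' L"
  unfolding phat_def by (rule tint_eq_haar_sum) (use assms supported_phat_integrand const_mod_ball_phat_integrand in auto)

lemma phat_eq_phat_zero:
  assumes \<eta>: "\<eta> \<in> Qp p" and \<eta>N: "\<eta> N = 0"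
  shows "phat p \<phi> \<eta> = phat p \<phi> (pzero p)"
  unfolding phat_def
proof (rule tint_cong)
  fix x assume x: "x \<in> Qp p"
  have z: "pzero p \<in> Qp p" "pzero p N = 0"
    unfolding pzero_def emb_def using emb_Qp[OF zinvp_int[of 0]] rmod_eq_0_iff by (simp_all add: emb_def)
  show "chi (pmul p \<eta> x) * \<phi> x = chi (pmul p (pzero p) x) * \<phi> x"
    using phi_support_digit[OF x] chi_pmul_eq_1[OF \<eta> x \<eta>N] chi_pmul_eq_1[OF z(1) x z(2)] by fastforce
qed

lemma phi_refined_grid:
  assumes LM: "L \<le> - M - 1" and LN: "L \<le> N"
  shows "\<phi> (psub p (pscale p (-1) (emb p (of_nat k * ppow p (- N)))) (emb p (node j)))
       = \<phi> (emb p (of_nat (nat ((int k - int j) mod int (p ^ nat (N - L)))) * ppow p (- (N + 1))))"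
proof -
  define P where "P = p ^ nat (N - L)"
  define m where "m = nat ((int k - int j) mod int P)"
  define A where "A = ppow p (- (N + 1))"
  define t where "t = (int k - int j) div int P"
  define zv where "zv = of_int (int P * t) * A"
  define x where "x = psub p (pscale p (-1) (emb p (of_nat k * ppow p (- N)))) (emb p (node j))"
  define z where "z = emb p zv"
  have "0 < P" unfolding P_def using p1 by simp
  then have d: "int k - int j = int m + int P * t" unfolding m_def t_def by simp
  have "zv = ppow p (-1 - L) * of_int t" unfolding zv_def A_def P_def
    using ppow_nat[of "N - L"] ppow_add[of "N - L" "- (N + 1)"] LN by (simp add: ac_simps)
  then have "pdvd p (-1 - L) zv" unfolding pdvd_def by blast
  then have "pdvd p M zv" by (rule pdvd_mono[rotated]) (use LM in simp)
  then have zM: "z M = 0" unfolding z_def emb_def using rmod_eq_0_iff by simp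
  have zQ: "z \<in> Qp p" unfolding z_def zv_def A_def by (intro emb_Qp zinvp_mult zinvp_int zinvp_ppow)
  have "x = padd p (emb p (of_nat m * A)) z"
  proof (rule Qp_eqI_approx[where q="\<lambda>n. of_int (int k - int j) * A"])
    have pN: "ppow p (-1) * ppow p (- N) = A"
      unfolding A_def using ppow_add[of "-1" "- N"] by (simp add: algebra_simps)
    fix n
    have "pdvd p n (x n - (ppow p (-1) * (of_nat k * ppow p (- N)) - node j))"
      unfolding x_def by (intro psub_approx pscale_approx emb_pdvd)
    moreover have "ppow p (-1) * (of_nat k * ppow p (- N)) - node j = of_int (int k - int j) * A"
      unfolding node_eq A_def[symmetric] pN[symmetric] by (simp add: algebra_simps)
    ultimately show "pdvd p n (x n - of_int (int k - int j) * A)" by simp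
    have "pdvd p n (padd p (emb p (of_nat m * A)) z n - (of_nat m * A + zv))" unfolding z_def
      by (intro padd_approx emb_pdvd)
    moreover have "of_nat m * A + zv = of_int (int k - int j) * A"
      unfolding zv_def d by (simp add: algebra_simps)
    ultimately show "pdvd p n (padd p (emb p (of_nat m * A)) z n - of_int (int k - int j) * A)" by simp
  qed (use zQ grid_Qp pscale_Qp emb_node_Qp psub_Qp padd_Qp in \<open>auto simp: x_def A_def\<close>)
  then show ?thesis using phi_padd_ball[OF grid_Qp zQ zM] unfolding x_def m_def P_def A_def by simp
qed

definition refinement_mask :: "(nat \<Rightarrow> complex) \<Rightarrow> padic \<Rightarrow> complex" where
  "refinement_mask h \<xi> = 1 / of_nat p * (\<Sum>k<p ^ (nat N + 1). h k * chi (pmul p (emb p (of_nat k)) \<xi>))"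

lemma refinement_mask_pscale:
  assumes xi: "\<xi> \<in> Qp p"
  shows "refinement_mask h (pscale p (- N) \<xi>)
    = 1 / of_nat p * (\<Sum>k<p ^ (nat N + 1). h k * e2pi (\<xi> N * ppow p (- N) * of_nat k))"
proof -
  have "chi (pmul p (emb p (of_nat k)) (pscale p (- N) \<xi>)) = e2pi (\<xi> N * ppow p (- N) * of_nat k)" for k
  proof -
    have "chi (pmul p (pscale p (- N) \<xi>) (emb p (of_nat k))) = e2pi (pscale p (- N) \<xi> 0 * of_nat k)"
      by (rule chi_pmul_emb[OF pscale_Qp[OF xi] zinvp_of_nat]) (simp add: pdvd_of_nat)
    then show ?thesis using pmul_commute[of "pscale p (- N) \<xi>" "emb p (of_nat k)"]
      unfolding pscale_def by (simp add: ac_simps)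
  qed
  then show ?thesis unfolding refinement_mask_def by simp
qed

lemma phat_two_scale:
  assumes h: "refinement_coeffs h" and xi: "\<xi> \<in> Qp p"
  shows "phat p \<phi> \<xi> = refinement_mask h (pscale p (- N) \<xi>) * phat p \<phi> (pscale p 1 \<xi>)"
proof -
  obtain b where b: "\<forall>n\<le>b. \<xi> n = 0" using Qp_low[OF xi] by blast
  \<comment> \<open>At resolution \<open>p\<^sup>L\<close> both \<open>\<chi>(\<xi> \<cdot>)\<close> and \<open>\<phi>\<close> are constant, so both transforms are finite sums
    over the grid \<open>k p\<^sup>-\<^sup>N\<close> (resp. \<open>m p\<^bsup>-N-1\<^esup>\<close>), \<open>k, m < P\<close>.\<close>
  define L where "L = min b (min (- M - 1) N)"
  define P where "P = p ^ nat (N - L)"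
  define \<theta> where "\<theta> = \<xi> N * ppow p (- N)"
  define \<sigma> where "\<sigma> j k = nat ((int k - int j) mod int P)" for j k
  define g where "g T k = emb p (of_nat k * ppow p (- T))" for T k
  define S where "S = (\<Sum>m<P. e2pi (\<theta> * of_nat m) * \<phi> (g (N + 1) m))"
  define H where "H = (\<Sum>j<p ^ (nat N + 1). h j * e2pi (\<theta> * of_nat j))"
  have xL: "\<xi> L = 0" using b by (simp add: L_def)
  have P0: "0 < P" unfolding P_def using p1 by simp
  have "\<theta> * of_nat P = ppow p (- L) * \<xi> N"
    unfolding \<theta>_def P_def using ppow_nat[of "N - L"] ppow_add[of "- N" "N - L"] by (simp add: L_def ac_simps)
  moreover have "pdvd p (L + - L) (ppow p (- L) * \<xi> N)"
    by (rule pdvd_ppow_mult[OF Qp_pdvd_of_zero[OF xi xL]])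
  ultimately have period: "pdvd p 0 (\<theta> * of_nat P)" by simp
  have chi_grid: "chi (pmul p \<xi> (g N k)) = e2pi (\<theta> * of_nat k)" for k
    unfolding g_def chi_pmul_grid[OF xi] \<theta>_def by (simp add: ac_simps)
  have summand: "chi (pmul p \<xi> (g N k)) * \<phi> (g N k)
      = (\<Sum>j<p ^ (nat N + 1). h j * e2pi (\<theta> * of_nat j) * (e2pi (\<theta> * of_nat (\<sigma> j k)) * \<phi> (g (N + 1) (\<sigma> j k))))" for k
  proof -
    have refined: "\<phi> (g N k) = (\<Sum>j<p ^ (nat N + 1). h j * \<phi> (g (N + 1) (\<sigma> j k)))"
      using h grid_Qp phi_refined_grid[of L k] unfolding refinement_coeffs_def g_def \<sigma>_def P_def
      by (simp add: L_def)
    show ?thesis unfolding chi_grid refined sum_distrib_left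
    proof (rule sum.cong[OF refl])
      fix j
      show "e2pi (\<theta> * of_nat k) * (h j * \<phi> (g (N + 1) (\<sigma> j k)))
          = h j * e2pi (\<theta> * of_nat j) * (e2pi (\<theta> * of_nat (\<sigma> j k)) * \<phi> (g (N + 1) (\<sigma> j k)))"
        unfolding e2pi_mult_mod[OF period P0, of k j] \<sigma>_def by (simp add: ac_simps)
    qed
  qed
  have "phat p \<phi> \<xi> = of_real (real_of_rat (ppow p L)) * (\<Sum>k<P. chi (pmul p \<xi> (g N k)) * \<phi> (g N k))"
    using phat_eq_haar_sum[OF xi, of L N] xL unfolding haar_sum_def P_def g_def by (simp add: L_def)
  also have "\<dots> = of_real (real_of_rat (ppow p L)) *
      (\<Sum>j<p ^ (nat N + 1). h j * e2pi (\<theta> * of_nat j) * (\<Sum>k<P. e2pi (\<theta> * of_nat (\<sigma> j k)) * \<phi> (g (N + 1) (\<sigma> j k))))"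
    unfolding summand by (subst sum.swap) (simp add: sum_distrib_left)
  also have "\<dots> = of_real (real_of_rat (ppow p L)) * (H * S)"
    unfolding \<sigma>_def sum_mod_shift[OF P0, where G="\<lambda>m. e2pi (\<theta> * of_nat m) * \<phi> (g (N + 1) m)"]
    unfolding H_def S_def sum_distrib_right ..
  finally have lhs: "phat p \<phi> \<xi> = of_real (real_of_rat (ppow p L)) * (H * S)" .
  have pxQ: "pscale p 1 \<xi> \<in> Qp p" using pscale_Qp[OF xi] .
  have pxi: "pscale p 1 \<xi> (L + 1) = 0" "pscale p 1 \<xi> (N + 1) = of_nat p * \<xi> N"
    using xL ppow_1 unfolding pscale_def by auto
  have "chi (pmul p (pscale p 1 \<xi>) (g (N + 1) m)) = e2pi (\<theta> * of_nat m)" for m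
    unfolding g_def chi_pmul_grid[OF pxQ] pxi(2) \<theta>_def
    using ppow_add[of 1 "- (N + 1)"] ppow_1 by (simp add: ac_simps)
  then have "phat p \<phi> (pscale p 1 \<xi>) = of_real (real_of_rat (ppow p (L + 1))) * S"
    using phat_eq_haar_sum[OF pxQ, of "L + 1" "N + 1"] pxi(1)
    unfolding haar_sum_def S_def P_def g_def by (simp add: L_def)
  also have "\<dots> = of_nat p * (of_real (real_of_rat (ppow p L)) * S)"
    using ppow_add[of L 1] ppow_1 by (simp add: of_rat_mult)
  finally have rhs: "phat p \<phi> (pscale p 1 \<xi>) = of_nat p * (of_real (real_of_rat (ppow p L)) * S)" .
  show ?thesis
    unfolding lhs rhs refinement_mask_pscale[OF xi] H_def \<theta>_def using p1 by (simp add: field_simps)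
qed

lemma phat_iterate:
  assumes h: "refinement_coeffs h" and xi: "\<xi> \<in> Qp p"
  shows "phat p \<phi> \<xi> = (\<Prod>j<n. refinement_mask h (pscale p (int j - N) \<xi>)) * phat p \<phi> (pscale p (int n) \<xi>)"
proof (induction n)
  case 0 then show ?case by (simp add: pscale_0)
next
  case (Suc n)
  have mQ: "pscale p (int n) \<xi> \<in> Qp p" using pscale_Qp xi by blast
  have e1: "pscale p (- N) (pscale p (int n) \<xi>) = pscale p (int n - N) \<xi>" by (simp add: pscale_pscale)
  have e2: "pscale p 1 (pscale p (int n) \<xi>) = pscale p (int (Suc n)) \<xi>" by (simp add: pscale_pscale add.commute)
  show ?case using Suc phat_two_scale[OF h mQ] unfolding e1 e2 by (simp add: ac_simps)
qed

lemma phat_eq_infinite_product: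
  assumes h: "refinement_coeffs h" and xi: "\<xi> \<in> Qp p"
  shows "(\<lambda>n. phat p \<phi> (pzero p) * (\<Prod>j<n. refinement_mask h (pscale p (int j - N) \<xi>)))
           \<longlonglongrightarrow> phat p \<phi> \<xi>"
proof (rule tendsto_eventually)
  obtain b where b: "\<forall>n\<le>b. \<xi> n = 0" using Qp_low[OF xi] by blast
  show "\<forall>\<^sub>F n in sequentially. phat p \<phi> (pzero p) * (\<Prod>j<n. refinement_mask h (pscale p (int j - N) \<xi>))
          = phat p \<phi> \<xi>"
    unfolding eventually_sequentially
  proof (intro exI allI impI)
    fix n assume "nat (N - b) \<le> n"
    then show "phat p \<phi> (pzero p) * (\<Prod>j<n. refinement_mask h (pscale p (int j - N) \<xi>)) = phat p \<phi> \<xi>"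
      using phat_iterate[OF h xi, of n] phat_eq_phat_zero[OF pscale_Qp[OF xi], of "int n"] b
      by (simp add: pscale_def mult.commute)
  qed
qed

end

theorem corollary3:
  fixes p :: nat and M N :: int and \<phi> :: "padic \<Rightarrow> complex"
  assumes "prime p"
    and "N \<ge> 0"
    and "DNM p N M \<phi>"
    and "refinable p \<phi>"
    and "phat p \<phi> (pzero p) \<noteq> 0"
  shows "\<exists>h :: nat \<Rightarrow> complex.
     (\<forall>x\<in>Qp p. \<phi> x = (\<Sum>k<p ^ (nat N + 1).
         h k * \<phi> (psub p (pmul p (emb p (1 / of_nat p)) x) (emb p (of_nat k / of_nat p ^ (nat N + 1))))))
   \<and> (let m0 = (\<lambda>\<xi>. (1 / of_nat p) * (\<Sum>k<p ^ (nat N + 1). h k * chi (pmul p (emb p (of_nat k)) \<xi>)))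
      in \<forall>\<xi>\<in>Qp p. (\<lambda>n. phat p \<phi> (pzero p) * (\<Prod>j<n. m0 (pmul p (emb p (ppow p (int j - N))) \<xi>)))
                     \<longlonglongrightarrow> phat p \<phi> \<xi>)"
proof -
  interpret DNM_fun p N M \<phi>
    using prime_gt_1_nat assms by unfold_locales auto
  obtain h where h: "refinement_coeffs h" using refinement_equation[OF assms(4)] by blast
  have "\<phi> x = (\<Sum>k<p ^ (nat N + 1).
      h k * \<phi> (psub p (pmul p (emb p (1 / of_nat p)) x) (emb p (of_nat k / of_nat p ^ (nat N + 1)))))"
    if "x \<in> Qp p" for x
    using h that pmul_inverse_p unfolding refinement_coeffs_def node_def by simp
  moreover have "(\<lambda>n. phat p \<phi> (pzero p) * (\<Prod>j<n. refinement_mask h (pmul p (emb p (ppow p (int j - N))) \<xi>)))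
      \<longlonglongrightarrow> phat p \<phi> \<xi>" if "\<xi> \<in> Qp p" for \<xi>
    using phat_eq_infinite_product[OF h that] pmul_emb_ppow[OF that] by simp
  ultimately show ?thesis unfolding Let_def refinement_mask_def by blast
qed

end
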